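(* Let $C_n=\{x_0,\dots,x_{n-1}\}$, $n\ge3$, be a digital cycle and $f:C_n\to C_n$ continuous. Then (i) $L(f)\in\{0,1,2\}$. (ii) If moreover $C_n\subset\mathbb Z^m$ with $m\le3$ and the adjacency of $C_n$ is the $c_1$-adjacency, then $\bar L(f)=L(f)$ when $n\neq4$, and $\bar L(f)=1$ when $n=4$.
   Context: A digital image is a set with a symmetric irreflexive adjacency relation; write $x\leftrightarrow y$ for adjacent and $x\Leftrightarrow y$ for adjacent or equal; a map is continuous if $x\leftrightarrow y$ implies $f(x)\Leftrightarrow f(y)$. A digital cycle of $n$ points is an image $C_n=\{x_0,\dots,x_{n-1}\}$ of $n$ distinct points in which $x_i\leftrightarrow x_j$ iff $j\equiv i\pm1\pmod n$. On $\mathbb Z^m$, $c_1$-adjacency means differing by $\pm1$ in exactly one coordinate. Simplicial homology: a $q$-simplex is a set of $q+1$ pairwise adjacent points; $C_q(X)$ is free abelian on ordered $q$-simplices $\langle x_0,\dots,x_q\rangle$ modulo $\langle x_{\rho(0)},\dots,x_{\rho(q)}\rangle=\operatorname{sgn}(\rho)\langle x_0,\dots,x_q\rangle$, with $\partial\langle x_0,\dots,x_q\rangle=\sum_i(-1)^i\langle x_0,\dots,\widehat{x_i},\dots,x_q\rangle$; $f_q\langle p_0,\dots,p_q\rangle=\langle f(p_0),\dots,f(p_q)\rangle$ (or $0$ if fewer than $q+1$ distinct points), inducing $f_{*,q}$ on $H_q$; $L(f)=\sum_q(-1)^q\operatorname{tr}(f_{*,q})$ with traces on $H_q\otimes\mathbb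 Q$. Cubical homology (for $X\subset\mathbb Z^m$ with $c_1$): elementary intervals $\{a,a+1\}$ (nondegenerate) or $\{a\}$; elementary cube $\sigma=t_1\times\dots\times t_m$, dimension $q$ = number of nondegenerate factors; $\bar C_q(X)$ is free abelian on $q$-cubes contained in $X$; with $A_i\sigma,B_i\sigma$ obtained by replacing $t_i$ by $\{\min t_i\}$, $\{\max t_i\}$ and $j_1<\dots<j_q$ the nondegenerate indices, $\partial\sigma=\sum_{i=1}^q(-1)^i(A_{j_i}\sigma-B_{j_i}\sigma)$. For continuous $f$, $\bar f_q(\sigma)=0$ if $f(\sigma)$ is not a $q$-cube; otherwise, with $\tau=f(\sigma)$ and $\sigma,\tau$ identified with $\{0,1\}^q$ via nondegenerate coordinates, $f|_\sigma$ is $(x_i)\mapsto(y_i)$ with $y_i\in\{x_{\pi(i)},1-x_{\pi(i)}\}$ for a permutation $\pi$, and $\bar f_q(\sigma)=\operatorname{sgn}(\pi)(-1)^r\tau$, $r$ the number of reflected coordinates. For $m\le4$ this is a known chain map inducing $\bar f_{*,q}$ on $\bar H_q$; $\bar L(f)=\sum_q(-1)^q\operatorname{tr}(\bar f_{*,q})$, traces on $\bar H_q\otimes\mathbb Q$. *)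

theory Defs
  imports Complex_Main "HOL-Combinatorics.Permutations"
begin

text \<open>A digital image is a set X with an adjacency relation adj (only its restriction to X matters).\<close>

definition digital_continuous :: "'a set \<Rightarrow> ('a \<Rightarrow> 'a \<Rightarrow> bool) \<Rightarrow> ('a \<Rightarrow> 'a) \<Rightarrow> bool" where
  "digital_continuous X adj f \<longleftrightarrow>
     f ` X \<subseteq> X \<and> (\<forall>u\<in>X. \<forall>v\<in>X. adj u v \<longrightarrow> f u = f v \<or> adj (f u) (f v))"

definition digital_cycle :: "'a set \<Rightarrow> ('a \<Rightarrow> 'a \<Rightarrow> bool) \<Rightarrow> nat \<Rightarrow> (nat \<Rightarrow> 'a) \<Rightarrow> bool" where
  "digital_cycle X adj n x \<longleftrightarrow>
     inj_on x {..<n} \<and> X = x ` {..<n} \<and>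
     (\<forall>i<n. \<forall>j<n. adj (x i) (x j) \<longleftrightarrow> (j = Suc i mod n \<or> i = Suc j mod n))"

text \<open>c_1 adjacency on Z^m, points of Z^m represented as integer lists of length m.\<close>
definition c1_adj :: "int list \<Rightarrow> int list \<Rightarrow> bool" where
  "c1_adj u v \<longleftrightarrow> length u = length v \<and>
     (\<exists>k<length u. \<bar>u ! k - v ! k\<bar> = 1 \<and> (\<forall>i<length u. i \<noteq> k \<longrightarrow> u ! i = v ! i))"

definition lincomb :: "('c \<Rightarrow> rat) list \<Rightarrow> (nat \<Rightarrow> rat) \<Rightarrow> 'c \<Rightarrow> rat" where
  "lincomb vs a = (\<lambda>x. \<Sum>i<length vs. a i * (vs ! i) x)"

definition lin_indep :: "('c \<Rightarrow> rat) list \<Rightarrow> bool" where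
  "lin_indep vs \<longleftrightarrow> (\<forall>a. lincomb vs a = (\<lambda>_. 0) \<longrightarrow> (\<forall>i<length vs. a i = 0))"

text \<open>Trace of the map induced by Phi on the quotient space Z/B (B a subspace of Z, both
  invariant under Phi): take a basis bs of B, extend it by zs to a basis of Z; the classes
  of zs form a basis of Z/B, and the trace is the sum of the diagonal coefficients.\<close>
definition quot_trace :: "('c \<Rightarrow> rat) set \<Rightarrow> ('c \<Rightarrow> rat) set \<Rightarrow> (('c \<Rightarrow> rat) \<Rightarrow> ('c \<Rightarrow> rat)) \<Rightarrow> rat" where
  "quot_trace Z B Phi = (SOME t. \<exists>bs zs A.
      lin_indep (bs @ zs) \<and> range (lincomb bs) = B \<and> range (lincomb (bs @ zs)) = Z \<and>
      (\<forall>j<length zs. Phi (zs ! j) = lincomb (bs @ zs) (A j)) \<and>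
      t = (\<Sum>j<length zs. A j (length bs + j)))"

text \<open>cells q: basis of the q-chains; bd q s t: coefficient of t in the boundary of s (s a q-cell);
  fc q s t: coefficient of t in the image of s under the chain map.\<close>

definition chains :: "(nat \<Rightarrow> 'c set) \<Rightarrow> nat \<Rightarrow> ('c \<Rightarrow> rat) set" where
  "chains cells q = {c. \<forall>s. s \<notin> cells q \<longrightarrow> c s = 0}"

definition dmap :: "(nat \<Rightarrow> 'c set) \<Rightarrow> (nat \<Rightarrow> 'c \<Rightarrow> 'c \<Rightarrow> rat) \<Rightarrow> nat \<Rightarrow> ('c \<Rightarrow> rat) \<Rightarrow> 'c \<Rightarrow> rat" where
  "dmap cells bd q c = (\<lambda>t. if 0 < q \<and> t \<in> cells (q - 1) then (\<Sum>s\<in>cells q. c s * bd q s t) else 0)"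

definition fmap :: "(nat \<Rightarrow> 'c set) \<Rightarrow> (nat \<Rightarrow> 'c \<Rightarrow> 'c \<Rightarrow> rat) \<Rightarrow> nat \<Rightarrow> ('c \<Rightarrow> rat) \<Rightarrow> 'c \<Rightarrow> rat" where
  "fmap cells fc q c = (\<lambda>t. if t \<in> cells q then (\<Sum>s\<in>cells q. c s * fc q s t) else 0)"

definition cycles :: "(nat \<Rightarrow> 'c set) \<Rightarrow> (nat \<Rightarrow> 'c \<Rightarrow> 'c \<Rightarrow> rat) \<Rightarrow> nat \<Rightarrow> ('c \<Rightarrow> rat) set" where
  "cycles cells bd q = {c \<in> chains cells q. dmap cells bd q c = (\<lambda>_. 0)}"

definition boundaries :: "(nat \<Rightarrow> 'c set) \<Rightarrow> (nat \<Rightarrow> 'c \<Rightarrow> 'c \<Rightarrow> rat) \<Rightarrow> nat \<Rightarrow> ('c \<Rightarrow> rat) set" where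
  "boundaries cells bd q = dmap cells bd (Suc q) ` chains cells (Suc q)"

text \<open>Lefschetz number: alternating sum of traces of induced maps on H_q (x) Q, q = 0..N.\<close>
definition lefschetz :: "(nat \<Rightarrow> 'c set) \<Rightarrow> (nat \<Rightarrow> 'c \<Rightarrow> 'c \<Rightarrow> rat) \<Rightarrow> (nat \<Rightarrow> 'c \<Rightarrow> 'c \<Rightarrow> rat) \<Rightarrow> nat \<Rightarrow> rat" where
  "lefschetz cells bd fc N =
     (\<Sum>q\<le>N. (-1) ^ q * quot_trace (cycles cells bd q) (boundaries cells bd q) (fmap cells fc q))"

definition simplices :: "'a set \<Rightarrow> ('a \<Rightarrow> 'a \<Rightarrow> bool) \<Rightarrow> nat \<Rightarrow> 'a set set" where
  "simplices X adj q = {s. s \<subseteq> X \<and> finite s \<and> card s = Suc q \<and> (\<forall>x\<in>s. \<forall>y\<in>s. x \<noteq> y \<longrightarrow> adj x y)}"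

text \<open>Chosen orientation of a simplex (the basis element of C_q is the ordered simplex orient s).\<close>
definition orient :: "'a set \<Rightarrow> 'a list" where
  "orient s = (SOME xs. distinct xs \<and> set xs = s)"

text \<open>Sign of the permutation taking the distinct list ys to its rearrangement xs
  (parity of the number of inversions of xs relative to ys).\<close>
definition relsign :: "'a list \<Rightarrow> 'a list \<Rightarrow> rat" where
  "relsign xs ys = (-1) ^ card {(i, j). i < j \<and> j < length xs \<and>
      (\<exists>k l. l < k \<and> k < length ys \<and> ys ! k = xs ! i \<and> ys ! l = xs ! j)}"

definition remove_nth :: "nat \<Rightarrow> 'a list \<Rightarrow> 'a list" where
  "remove_nth i xs = take i xs @ drop (Suc i) xs"

text \<open>boundary of <x_0,...,x_q> = sum_i (-1)^i <x_0,..,hat x_i,..,x_q>, rewritten in the chosen basis.\<close>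
definition simp_bd :: "nat \<Rightarrow> 'a set \<Rightarrow> 'a set \<Rightarrow> rat" where
  "simp_bd q s t = (\<Sum>i<length (orient s).
      if t = set (remove_nth i (orient s))
      then (-1) ^ i * relsign (remove_nth i (orient s)) (orient t) else 0)"

text \<open>f_q <p_0,...,p_q> = <f p_0,...,f p_q>, or 0 if fewer than q+1 distinct points.\<close>
definition simp_fc :: "('a \<Rightarrow> 'a) \<Rightarrow> nat \<Rightarrow> 'a set \<Rightarrow> 'a set \<Rightarrow> rat" where
  "simp_fc f q s t = (if card (f ` s) = Suc q \<and> t = f ` s
      then relsign (map f (orient s)) (orient t) else 0)"

definition simp_lefschetz :: "'a set \<Rightarrow> ('a \<Rightarrow> 'a \<Rightarrow> bool) \<Rightarrow> ('a \<Rightarrow> 'a) \<Rightarrow> rat" where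
  "simp_lefschetz X adj f = lefschetz (simplices X adj) simp_bd (simp_fc f) (card X)"

text \<open>Elementary cube with minimal vertex a and nondegenerate coordinate set J, as a set of lattice points.\<close>
definition cube_pts :: "int list \<Rightarrow> nat set \<Rightarrow> int list set" where
  "cube_pts a J = {p. length p = length a \<and>
     (\<forall>i<length a. if i \<in> J then p ! i = a ! i \<or> p ! i = a ! i + 1 else p ! i = a ! i)}"

definition cube_cells :: "nat \<Rightarrow> int list set \<Rightarrow> nat \<Rightarrow> (int list \<times> nat set) set" where
  "cube_cells m X q = {(a, J). length a = m \<and> J \<subseteq> {..<m} \<and> card J = q \<and> cube_pts a J \<subseteq> X}"

text \<open>boundary = sum_{i=1}^q (-1)^i (A_{j_i} - B_{j_i}), j_1 < ... < j_q the nondegenerate coordinates.\<close>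
definition cube_bd :: "nat \<Rightarrow> int list \<times> nat set \<Rightarrow> int list \<times> nat set \<Rightarrow> rat" where
  "cube_bd q s t = (case s of (a, J) \<Rightarrow>
     (\<Sum>i<card J. let j = sorted_list_of_set J ! i in
        (-1) ^ (Suc i) * ((if t = (a, J - {j}) then 1 else 0)
                         - (if t = (a[j := a ! j + 1], J - {j}) then 1 else 0))))"

text \<open>Vertex of the cube (a,J) with nondegenerate coordinates x_i (i < card J) given by
  x_i = 1 iff i \<in> S.\<close>
definition cube_vertex :: "int list \<Rightarrow> nat set \<Rightarrow> nat set \<Rightarrow> int list" where
  "cube_vertex a J S = map (\<lambda>k. if k \<in> J \<and> (\<exists>i\<in>S. i < card J \<and> sorted_list_of_set J ! i = k)
                               then a ! k + 1 else a ! k) [0..<length a]"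

text \<open>f restricted to sigma, in nondegenerate coordinates, is (x_i) |-> (y_i) with
  y_i = x_{pi i} for i not in R and y_i = 1 - x_{pi i} for i in R.\<close>
definition cube_form :: "(int list \<Rightarrow> int list) \<Rightarrow> int list \<times> nat set \<Rightarrow> int list \<times> nat set
    \<Rightarrow> (nat \<Rightarrow> nat) \<Rightarrow> nat set \<Rightarrow> bool" where
  "cube_form f s t p R = (case s of (a, J) \<Rightarrow> case t of (b, K) \<Rightarrow>
     p permutes {..<card J} \<and> R \<subseteq> {..<card J} \<and>
     (\<forall>S\<subseteq>{..<card J}. f (cube_vertex a J S) =
         cube_vertex b K {i. i < card J \<and> ((p i \<in> S) \<noteq> (i \<in> R))}))"

definition cube_fc :: "(int list \<Rightarrow> int list) \<Rightarrow> nat \<Rightarrow> int list \<times> nat set \<Rightarrow> int list \<times> nat set \<Rightarrow> rat" where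
  "cube_fc f q s t = (if f ` cube_pts (fst s) (snd s) = cube_pts (fst t) (snd t) \<and>
        (\<exists>p R. cube_form f s t p R)
      then (SOME e. \<exists>p R. cube_form f s t p R \<and> e = of_int (sign p) * (-1) ^ card R)
      else 0)"

definition cube_lefschetz :: "nat \<Rightarrow> int list set \<Rightarrow> (int list \<Rightarrow> int list) \<Rightarrow> rat" where
  "cube_lefschetz m X f = lefschetz (cube_cells m X) cube_bd (cube_fc f) m"

end

theory Submission
  imports Defs
begin

text \<open>
  In both theories the complex of a digital cycle C_n consists of its n vertices and n edges,
  plus possibly one top cell: the triangle C_3 is a 2-simplex, and the square C_4 in Z^m is a
  2-cube, while otherwise there are no higher cells (a cubical cycle has even length, as every
  c_1-step changes the coordinate sum by one). Any self-map acts on H_0 = Q as the identity.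
  Without a top cell, H_1 = Q is spanned by the fundamental cycle, on which f acts by its degree:
  the signed image of the edges commutes with the boundary map, so every edge is covered the same
  number deg f of times, and since n edges cover n edges at most once each, deg f is -1, 0 or 1.
  Hence L(f) = 1 - deg f in {0, 1, 2} for both theories. With a top cell, H_1 = H_2 = 0 and
  L(f) = 1.
\<close>

section \<open>Traces on quotient spaces\<close>

lemma sum_lessThan_add_split: "(\<Sum>i<m + (k::nat). g i) = (\<Sum>i<m. g i) + (\<Sum>i<k. g (m + i))"
  by (induction k) (auto simp: algebra_simps)

lemma lincomb_append:
  "lincomb (bs @ zs) a = (\<lambda>x. lincomb bs a x + lincomb zs (\<lambda>i. a (length bs + i)) x)"
  unfolding lincomb_def by (rule ext) (simp add: sum_lessThan_add_split nth_append)

lemma lincomb_Nil: "lincomb [] a = (\<lambda>_. 0)"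
  by (simp add: lincomb_def)

lemma lincomb_single: "lincomb [w] a = (\<lambda>x. a 0 * w x)"
  by (simp add: lincomb_def)

lemma lincomb_cong:
  assumes "\<And>i. i < length vs \<Longrightarrow> a i = b i"
  shows "lincomb vs a = lincomb vs b"
  unfolding lincomb_def using assms by auto

lemma lincomb_delta:
  assumes "k < length zs"
  shows "lincomb zs (\<lambda>i. if i = k then c else 0) = (\<lambda>x. c * (zs ! k) x)"
proof (rule ext)
  fix x
  have eq: "(\<lambda>i. (if i = k then c else 0) * (zs ! i) x) = (\<lambda>i. if i = k then c * (zs ! k) x else 0)"
    by auto
  show "lincomb zs (\<lambda>i. if i = k then c else 0) x = c * (zs ! k) x"
    unfolding lincomb_def eq using assms by simp
qed

lemma lincomb_add: "lincomb vs (\<lambda>i. a i + b i) = (\<lambda>x. lincomb vs a x + lincomb vs b x)"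
  unfolding lincomb_def by (auto intro!: ext simp: algebra_simps sum.distrib)

lemma lincomb_scale: "lincomb vs (\<lambda>i. c * a i) = (\<lambda>x. c * lincomb vs a x)"
  unfolding lincomb_def by (rule ext) (simp add: sum_distrib_left mult.assoc)

lemma lincomb_zero: "lincomb vs (\<lambda>_. 0) = (\<lambda>_. 0)"
  by (simp add: lincomb_def)

lemma lincomb_prefix:
  "lincomb bs a = lincomb (bs @ zs) (\<lambda>i. if i < length bs then a i else 0)"
proof -
  have "lincomb bs (\<lambda>i. if i < length bs then a i else 0) = lincomb bs a"
    by (rule lincomb_cong) simp
  moreover have "lincomb zs (\<lambda>i. if length bs + i < length bs then a (length bs + i) else 0)
      = lincomb zs (\<lambda>_. 0)"
    by (rule lincomb_cong) simp
  ultimately show ?thesis by (simp add: lincomb_append lincomb_zero)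
qed

lemma lincomb_suffix:
  "lincomb zs c = lincomb (bs @ zs) (\<lambda>i. if i < length bs then 0 else c (i - length bs))"
proof -
  have "lincomb bs (\<lambda>i. if i < length bs then 0 else c (i - length bs)) = lincomb bs (\<lambda>_. 0)"
    by (rule lincomb_cong) simp
  moreover have "lincomb zs (\<lambda>i. if length bs + i < length bs then 0 else c (length bs + i - length bs))
      = lincomb zs c"
    by (rule lincomb_cong) simp
  ultimately show ?thesis by (simp add: lincomb_append lincomb_zero)
qed

lemma nth_in_range_lincomb:
  assumes "k < length zs" shows "zs ! k \<in> range (lincomb zs)"
proof -
  have "zs ! k = lincomb zs (\<lambda>i. if i = k then 1 else 0)"
    using lincomb_delta[OF assms, of 1] by simp
  then show ?thesis by blast
qed

lemma lincomb_in_subspace: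
  assumes "\<And>i. i < length vs \<Longrightarrow> vs ! i \<in> V"
    and zero: "(\<lambda>_. 0) \<in> V"
    and add: "\<And>u w. u \<in> V \<Longrightarrow> w \<in> V \<Longrightarrow> (\<lambda>x. u x + w x) \<in> V"
    and scale: "\<And>u c. u \<in> V \<Longrightarrow> (\<lambda>x. c * u x) \<in> V"
  shows "lincomb vs a \<in> V"
  using assms(1)
proof (induction vs rule: rev_induct)
  case Nil
  then show ?case using zero by (simp add: lincomb_Nil)
next
  case (snoc w vs)
  have "lincomb vs a \<in> V"
    using snoc by (metis butlast_snoc length_append_singleton less_SucI nth_butlast)
  moreover have "w \<in> V" using snoc.prems[of "length vs"] by simp
  ultimately show ?case
    unfolding lincomb_append lincomb_single using add scale by blast
qed

lemma lin_indep_append_span_coeff: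
  assumes ind: "lin_indep (bs @ zs)" and span: "lincomb zs c \<in> range (lincomb bs)"
    and k: "k < length zs"
  shows "c k = 0"
proof -
  obtain d where d: "lincomb zs c = lincomb bs d" using span by auto
  define a where "a = (\<lambda>i. if i < length bs then - d i else c (i - length bs))"
  have "lincomb (bs @ zs) a = (\<lambda>x. lincomb bs (\<lambda>i. - 1 * d i) x + lincomb zs c x)"
    unfolding lincomb_append
    by (rule ext, rule arg_cong2[where f = "(+)"]; rule fun_cong, rule lincomb_cong) (auto simp: a_def)
  also have "\<dots> = (\<lambda>_. 0)" unfolding lincomb_scale d by simp
  finally have "a (length bs + k) = 0" using ind k unfolding lin_indep_def by simp
  then show ?thesis by (simp add: a_def)
qed

lemma lin_indep_append_nth_not_in_span:
  assumes "lin_indep (bs @ zs)" and k: "k < length zs"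
  shows "zs ! k \<notin> range (lincomb bs)"
proof
  assume "zs ! k \<in> range (lincomb bs)"
  then show False
    using lin_indep_append_span_coeff[OF assms(1) _ k, of "\<lambda>i. if i = k then 1 else 0"]
    by (simp add: lincomb_delta[OF k])
qed

lemma quot_trace_eqI:
  assumes "lin_indep (bs @ zs)" "range (lincomb bs) = B" "range (lincomb (bs @ zs)) = Z"
      "\<forall>j<length zs. Phi (zs ! j) = lincomb (bs @ zs) (A j)"
    and uniq: "\<And>bs zs A. lin_indep (bs @ zs) \<Longrightarrow> range (lincomb bs) = B \<Longrightarrow>
        range (lincomb (bs @ zs)) = Z \<Longrightarrow> \<forall>j<length zs. Phi (zs ! j) = lincomb (bs @ zs) (A j) \<Longrightarrow>
        (\<Sum>j<length zs. A j (length bs + j)) = c"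
  shows "quot_trace Z B Phi = c"
proof -
  let ?P = "\<lambda>t. \<exists>bs zs A.
      lin_indep (bs @ zs) \<and> range (lincomb bs) = B \<and> range (lincomb (bs @ zs)) = Z \<and>
      (\<forall>j<length zs. Phi (zs ! j) = lincomb (bs @ zs) (A j)) \<and>
      t = (\<Sum>j<length zs. A j (length bs + j))"
  have "?P (\<Sum>j<length zs. A j (length bs + j))" using assms(1-4) by blast
  then have "?P (SOME t. ?P t)" by (rule someI)
  then show ?thesis unfolding quot_trace_def using uniq by blast
qed

lemma quot_trace_trivial:
  assumes "lin_indep bs0" and "range (lincomb bs0) = B" and "Z = B"
  shows "quot_trace Z B Phi = 0"
proof (rule quot_trace_eqI[of bs0 "[]"])
  fix bs zs A
  assume ind: "lin_indep (bs @ zs)" and "range (lincomb bs) = B" "range (lincomb (bs @ zs)) = Z"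
  then have "zs ! 0 \<notin> Z" if "zs \<noteq> []"
    using lin_indep_append_nth_not_in_span[OF ind, of 0] that assms(3) by simp
  moreover have "zs ! 0 \<in> Z" if "zs \<noteq> []"
    using nth_in_range_lincomb[of "length bs" "bs @ zs"] that \<open>range (lincomb (bs @ zs)) = Z\<close>
    by (simp add: nth_append)
  ultimately show "(\<Sum>j<length zs. A j (length bs + j)) = 0" by fastforce
qed (use assms in simp_all)

definition pairing :: "'c set \<Rightarrow> ('c \<Rightarrow> rat) \<Rightarrow> ('c \<Rightarrow> rat) \<Rightarrow> rat" where
  "pairing S g w = (\<Sum>s\<in>S. g s * w s)"

lemma pairing_add: "pairing S g (\<lambda>x. u x + w x) = pairing S g u + pairing S g w"
  by (simp add: pairing_def algebra_simps sum.distrib)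

lemma pairing_scale: "pairing S g (\<lambda>x. c * u x) = c * pairing S g u"
  by (simp add: pairing_def algebra_simps sum_distrib_left)

text \<open>The classes of zs form a basis of Z/B, so this says that Z/B is one-dimensional.\<close>
lemma quot_dim_eq_1:
  assumes ind: "lin_indep (bs @ zs)" and B: "range (lincomb bs) = B"
    and Z: "range (lincomb (bs @ zs)) = Z"
    and ker: "\<And>w. w \<in> Z \<Longrightarrow> pairing S g w = 0 \<longleftrightarrow> w \<in> B"
    and nz: "\<exists>w\<in>Z. pairing S g w \<noteq> 0"
  shows "length zs = 1"
proof -
  have in_Z: "lincomb zs c \<in> Z" for c :: "nat \<Rightarrow> rat"
    using Z lincomb_suffix[of zs c bs] by (metis rangeI)
  have "zs \<noteq> []"
  proof
    assume "zs = []"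
    then have "Z = B" using B Z by simp
    then show False using ker nz by blast
  qed
  moreover have "\<not> 1 < length zs"
  proof
    assume l: "1 < length zs"
    then have l0: "0 < length zs" by linarith
    define p where "p = pairing S g (zs ! 0)"
    define q where "q = pairing S g (zs ! 1)"
    define c where "c = (\<lambda>i::nat. if i = 0 then q else if i = 1 then - p else (0::rat))"
    have "lincomb zs c = (\<lambda>x. lincomb zs (\<lambda>i. if i = 0 then q else 0) x
        + lincomb zs (\<lambda>i. if i = 1 then - p else 0) x)"
      by (subst lincomb_add[symmetric], rule lincomb_cong) (auto simp: c_def)
    also have "\<dots> = (\<lambda>x. q * (zs ! 0) x + - p * (zs ! 1) x)"
      using lincomb_delta[OF l0, of q] lincomb_delta[OF l, of "- p"] by simp
    finally have "lincomb zs c = (\<lambda>x. q * (zs ! 0) x + - p * (zs ! 1) x)" .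
    then have "pairing S g (lincomb zs c) = 0"
      by (simp only: pairing_add pairing_scale flip: p_def q_def) simp
    then have "lincomb zs c \<in> range (lincomb bs)" using ker[OF in_Z] B by simp
    then have "c 0 = 0" "c 1 = 0"
      using lin_indep_append_span_coeff[OF ind] l l0 by blast+
    then have "pairing S g (zs ! 0) = 0" by (simp add: c_def p_def)
    moreover have "zs ! 0 \<notin> B"
      using lin_indep_append_nth_not_in_span[OF ind l0] B by simp
    moreover have "zs ! 0 \<in> Z"
      using in_Z[of "\<lambda>i. if i = 0 then 1 else 0"] by (simp add: lincomb_delta[OF l0])
    ultimately show False using ker by blast
  qed
  ultimately show ?thesis by (metis length_0_conv less_one linorder_neqE_nat)
qed

lemma quot_trace_dim_1:
  assumes basis: "lin_indep (bs0 @ [z0])" "range (lincomb bs0) = B" "range (lincomb (bs0 @ [z0])) = Z"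
      "Phi z0 = lincomb (bs0 @ [z0]) a0"
    and ker: "\<And>w. w \<in> Z \<Longrightarrow> pairing S g w = 0 \<longleftrightarrow> w \<in> B"
    and nz: "\<exists>w\<in>Z. pairing S g w \<noteq> 0"
    and eig: "\<And>w. w \<in> Z \<Longrightarrow> pairing S g (Phi w) = c * pairing S g w"
  shows "quot_trace Z B Phi = c"
proof (rule quot_trace_eqI[of bs0 "[z0]" B Z Phi "\<lambda>_. a0"])
  fix bs zs A
  assume ind: "lin_indep (bs @ zs)" and b: "range (lincomb bs) = B"
    and z: "range (lincomb (bs @ zs)) = Z"
    and A: "\<forall>j<length zs. Phi (zs ! j) = lincomb (bs @ zs) (A j)"
  obtain w where zs: "zs = [w]" using quot_dim_eq_1[OF ind b z ker nz] by (cases zs) auto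
  have wZ: "w \<in> Z" using nth_in_range_lincomb[of "length bs" "bs @ zs"] z zs by (simp add: nth_append)
  have w: "pairing S g w \<noteq> 0"
    using ker[OF wZ] lin_indep_append_nth_not_in_span[OF ind, of 0] b zs by simp
  have "pairing S g (lincomb bs a) = 0" for a
    using ker lincomb_prefix[of bs a zs] b z by (metis rangeI)
  then have "pairing S g (Phi w) = A 0 (length bs) * pairing S g w"
    using A zs by (simp add: lincomb_append lincomb_single pairing_add pairing_scale)
  then show "(\<Sum>j<length zs. A j (length bs + j)) = c"
    using eig[OF wZ] w zs by simp
qed (use basis in simp_all)

section \<open>The degree of a self-map of a cycle\<close>

lemma Suc_mod_eq: "i < (n::nat) \<Longrightarrow> Suc i mod n = (if Suc i = n then 0 else Suc i)"
  by auto

lemma pred_mod_eq: "k < (n::nat) \<Longrightarrow> (k + n - 1) mod n = (if k = 0 then n - 1 else k - 1)"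
proof -
  assume k: "k < n"
  show ?thesis
  proof (cases "k = 0")
    case True
    have "n - 1 < n" using k by simp
    then show ?thesis using True by simp
  next
    case False
    then have "k + n - 1 = (k - 1) + n" by simp
    then have "(k + n - 1) mod n = (k - 1) mod n" by simp
    also have "\<dots> = k - 1" using k by simp
    finally show ?thesis using False by simp
  qed
qed

lemma Suc_mod_eq_iff_pred_mod: "i < (n::nat) \<Longrightarrow> k < n \<Longrightarrow> (k = Suc i mod n) \<longleftrightarrow> (i = (k + n - 1) mod n)"
  using Suc_mod_eq[of i n] pred_mod_eq[of k n] by auto

lemma bij_betw_Suc_mod: "bij_betw (\<lambda>i. Suc i mod n) {..<n} {..<n}"
proof (cases "n = 0")
  case True then show ?thesis by simp
next
  case False
  show ?thesis
  proof (rule bij_betw_byWitness[where f'="\<lambda>k. (k + n - 1) mod n"])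
    show "\<forall>a\<in>{..<n}. (Suc a mod n + n - 1) mod n = a"
      using Suc_mod_eq_iff_pred_mod False by (metis lessThan_iff mod_less_divisor neq0_conv)
    show "\<forall>a'\<in>{..<n}. Suc ((a' + n - 1) mod n) mod n = a'"
      using Suc_mod_eq_iff_pred_mod False by (metis lessThan_iff mod_less_divisor neq0_conv)
    show "(\<lambda>i. Suc i mod n) ` {..<n} \<subseteq> {..<n}" using False by auto
    show "(\<lambda>k. (k + n - 1) mod n) ` {..<n} \<subseteq> {..<n}" using False by auto
  qed
qed

lemma sum_reindex_Suc_mod: "(\<Sum>i<n. g (Suc i mod n)) = (\<Sum>i<n. g i)"
  using sum.reindex_bij_betw[OF bij_betw_Suc_mod, of g] by simp

lemma sum_delta_Suc_mod:
  assumes "k < (n::nat)"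
  shows "(\<Sum>i<n. if k = Suc i mod n then g i else 0) = g ((k + n - 1) mod n)"
proof -
  have "(\<Sum>i<n. if k = Suc i mod n then g i else 0) = (\<Sum>i<n. if i = (k + n - 1) mod n then g i else 0)"
    using Suc_mod_eq_iff_pred_mod[OF _ assms] by (intro sum.cong) auto
  also have "\<dots> = g ((k + n - 1) mod n)" using assms by (simp add: sum.delta)
  finally show ?thesis .
qed

lemma sum_reindex_pred_mod:
  assumes "0 < (n::nat)"
  shows "(\<Sum>k<n. g ((k + n - 1) mod n)) = (\<Sum>k<n. g k)"
proof -
  have "(\<Sum>k<n. g ((k + n - 1) mod n)) = (\<Sum>k<n. g ((Suc k mod n + n - 1) mod n))"
    using sum_reindex_Suc_mod[of "\<lambda>k. g ((k + n - 1) mod n)" n] by (simp only:)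
  also have "\<dots> = (\<Sum>k<n. g k)"
  proof (intro sum.cong refl)
    fix k assume "k \<in> {..<n}"
    then have "k = (Suc k mod n + n - 1) mod n"
      using Suc_mod_eq_iff_pred_mod[of k n "Suc k mod n"] assms by simp
    then show "g ((Suc k mod n + n - 1) mod n) = g k" by simp
  qed
  finally show ?thesis .
qed

definition cycle_map :: "nat \<Rightarrow> (nat \<Rightarrow> nat) \<Rightarrow> bool" where
  "cycle_map n \<phi> \<longleftrightarrow> (\<forall>k<n. \<phi> k < n) \<and> (\<forall>i<n. \<phi> (Suc i mod n) = \<phi> i \<or>
     \<phi> (Suc i mod n) = Suc (\<phi> i) mod n \<or> \<phi> i = Suc (\<phi> (Suc i mod n)) mod n)"

text \<open>Coefficient of edge j = {j, j+1} in the image of edge i under the index map \<phi>: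
  1 if \<phi> runs through it forwards, -1 if backwards, 0 if edge i is collapsed.\<close>
definition edge_flow :: "nat \<Rightarrow> (nat \<Rightarrow> nat) \<Rightarrow> nat \<Rightarrow> nat \<Rightarrow> int" where
  "edge_flow n \<phi> i j = (if \<phi> (Suc i mod n) = Suc (\<phi> i) mod n \<and> j = \<phi> i then 1
     else if \<phi> i = Suc (\<phi> (Suc i mod n)) mod n \<and> j = \<phi> (Suc i mod n) then -1 else 0)"

definition covering_number :: "nat \<Rightarrow> (nat \<Rightarrow> nat) \<Rightarrow> nat \<Rightarrow> int" where
  "covering_number n \<phi> j = (\<Sum>i<n. edge_flow n \<phi> i j)"

definition cycle_degree :: "nat \<Rightarrow> (nat \<Rightarrow> nat) \<Rightarrow> int" where
  "cycle_degree n \<phi> = covering_number n \<phi> 0"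

lemma sum_delta_mult:
  assumes "a < (n::nat)"
  shows "(\<Sum>j<n. (if j = a then c else 0) * (h j :: int)) = c * h a"
proof -
  have "(\<Sum>j<n. (if j = a then c else 0) * h j) = (\<Sum>j<n. if j = a then c * h a else 0)"
    by (intro sum.cong) auto
  also have "\<dots> = c * h a" using assms by (simp only: sum.delta finite_lessThan lessThan_iff if_True)
  finally show ?thesis .
qed

lemma Suc_Suc_mod_neq: "3 \<le> n \<Longrightarrow> a < (n::nat) \<Longrightarrow> Suc (Suc a mod n) mod n \<noteq> a"
proof -
  assume n: "3 \<le> n" and a: "a < n"
  show ?thesis
  proof (cases "Suc a = n")
    case True then show ?thesis using n by simp
  next
    case False
    then have "Suc a mod n = Suc a" using a by simp
    moreover have "Suc (Suc a) mod n \<noteq> a"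
    proof (cases "Suc (Suc a) = n")
      case True then show ?thesis using n by simp
    next
      case F2: False
      have "Suc (Suc a) < n" using a False F2 by linarith
      then show ?thesis by simp
    qed
    ultimately show ?thesis by simp
  qed
qed

lemma edge_flow_boundary:
  assumes n3: "3 \<le> n" and c: "cycle_map n \<phi>" and i: "i < n" and k: "k < n"
  shows "(\<Sum>j<n. edge_flow n \<phi> i j * ((if k = Suc j mod n then 1 else 0) - (if k = j then 1 else 0))) =
         (if k = \<phi> (Suc i mod n) then 1 else 0) - (if k = \<phi> i then 1 else 0)"
proof -
  have n0: "0 < n" using i by simp
  have pi: "\<phi> i < n" and pn: "\<phi> (Suc i mod n) < n" using c i n0 unfolding cycle_map_def by auto
  let ?h = "\<lambda>j. ((if k = Suc j mod n then 1 else 0) - (if k = j then 1 else 0)) :: int"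
  consider (f) "\<phi> (Suc i mod n) = Suc (\<phi> i) mod n"
    | (b) "\<phi> (Suc i mod n) \<noteq> Suc (\<phi> i) mod n" "\<phi> i = Suc (\<phi> (Suc i mod n)) mod n"
    | (z) "\<phi> (Suc i mod n) \<noteq> Suc (\<phi> i) mod n" "\<phi> i \<noteq> Suc (\<phi> (Suc i mod n)) mod n"
    by blast
  then show ?thesis
  proof cases
    case f
    have nb: "\<phi> i \<noteq> Suc (\<phi> (Suc i mod n)) mod n" using Suc_Suc_mod_neq[OF n3 pi] f by simp
    have "(\<Sum>j<n. edge_flow n \<phi> i j * ?h j) = (\<Sum>j<n. (if j = \<phi> i then 1 else 0) * ?h j)"
      by (intro sum.cong) (use Suc_Suc_mod_neq[OF n3 pi] in \<open>auto simp: edge_flow_def f\<close>)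
    also have "\<dots> = ?h (\<phi> i)" using sum_delta_mult[OF pi] by simp
    finally show ?thesis using f by simp
  next
    case b
    have "(\<Sum>j<n. edge_flow n \<phi> i j * ?h j) = (\<Sum>j<n. (if j = \<phi> (Suc i mod n) then -1 else 0) * ?h j)"
      by (intro sum.cong) (use Suc_Suc_mod_neq[OF n3 pn] in \<open>auto simp: edge_flow_def b\<close>)
    also have "\<dots> = - ?h (\<phi> (Suc i mod n))" using sum_delta_mult[OF pn] by simp
    finally show ?thesis using b Suc_Suc_mod_neq[OF n3 pn] by auto
  next
    case z
    then have e: "\<phi> (Suc i mod n) = \<phi> i" using c i unfolding cycle_map_def by auto
    have "(\<Sum>j<n. edge_flow n \<phi> i j * ?h j) = 0"
      by (intro sum.neutral) (auto simp: edge_flow_def z)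
    then show ?thesis using e by simp
  qed
qed

lemma abs_sum_edge_flow_le_1:
  assumes n3: "3 \<le> n" and c: "cycle_map n \<phi>" and i: "i < n"
  shows "\<bar>\<Sum>j<n. edge_flow n \<phi> i j\<bar> \<le> 1"
proof -
  have n0: "0 < n" using i by simp
  have pi: "\<phi> i < n" and pn: "\<phi> (Suc i mod n) < n" using c i n0 unfolding cycle_map_def by auto
  consider (f) "\<phi> (Suc i mod n) = Suc (\<phi> i) mod n"
    | (b) "\<phi> (Suc i mod n) \<noteq> Suc (\<phi> i) mod n" "\<phi> i = Suc (\<phi> (Suc i mod n)) mod n"
    | (z) "\<phi> (Suc i mod n) \<noteq> Suc (\<phi> i) mod n" "\<phi> i \<noteq> Suc (\<phi> (Suc i mod n)) mod n"
    by blast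
  then show ?thesis
  proof cases
    case f
    have nb: "\<phi> i \<noteq> Suc (\<phi> (Suc i mod n)) mod n" using Suc_Suc_mod_neq[OF n3 pi] f by simp
    have "(\<Sum>j<n. edge_flow n \<phi> i j) = (\<Sum>j<n. if j = \<phi> i then 1 else 0)"
      by (intro sum.cong) (use Suc_Suc_mod_neq[OF n3 pi] in \<open>auto simp: edge_flow_def f\<close>)
    then show ?thesis using pi by (simp add: sum.delta)
  next
    case b
    have "(\<Sum>j<n. edge_flow n \<phi> i j) = (\<Sum>j<n. if j = \<phi> (Suc i mod n) then -1 else 0)"
      by (intro sum.cong) (use Suc_Suc_mod_neq[OF n3 pn] in \<open>auto simp: edge_flow_def b\<close>)
    then show ?thesis using pn by (simp add: sum.delta)
  next
    case z
    have "(\<Sum>j<n. edge_flow n \<phi> i j) = 0"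
      by (intro sum.neutral) (auto simp: edge_flow_def z)
    then show ?thesis by simp
  qed
qed

text \<open>The edge flow commutes with the boundary map of the cycle, so adjacent edges are
  covered equally often.\<close>
lemma covering_number_pred:
  assumes n3: "3 \<le> n" and c: "cycle_map n \<phi>" and k: "k < n"
  shows "covering_number n \<phi> ((k + n - 1) mod n) = covering_number n \<phi> k"
proof -
  let ?h = "\<lambda>j. ((if k = Suc j mod n then 1 else 0) - (if k = j then 1 else 0)) :: int"
  have "(\<Sum>j<n. covering_number n \<phi> j * ?h j) = (\<Sum>j<n. \<Sum>i<n. edge_flow n \<phi> i j * ?h j)"
    unfolding covering_number_def by (simp add: sum_distrib_right)
  also have "\<dots> = (\<Sum>i<n. \<Sum>j<n. edge_flow n \<phi> i j * ?h j)" by (rule sum.swap)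
  also have "\<dots> = (\<Sum>i<n. (if k = \<phi> (Suc i mod n) then 1 else 0) - (if k = \<phi> i then 1 else 0))"
    using edge_flow_boundary[OF n3 c _ k] by (intro sum.cong) auto
  also have "\<dots> = 0"
    using sum_reindex_Suc_mod[of "\<lambda>i. (if k = \<phi> i then 1 else 0) :: int" n] by (simp add: sum_subtractf)
  finally have z: "(\<Sum>j<n. covering_number n \<phi> j * ?h j) = 0" .
  have "(\<Sum>j<n. covering_number n \<phi> j * ?h j) = (\<Sum>j<n. if k = Suc j mod n then covering_number n \<phi> j else 0) -
      (\<Sum>j<n. if k = j then covering_number n \<phi> j else 0)"
  proof -
    have "(\<Sum>j<n. covering_number n \<phi> j * ?h j) = (\<Sum>j<n. (if k = Suc j mod n then covering_number n \<phi> j else 0) -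
      (if k = j then covering_number n \<phi> j else 0))" by (intro sum.cong) auto
    then show ?thesis by (simp add: sum_subtractf)
  qed
  also have "\<dots> = covering_number n \<phi> ((k + n - 1) mod n) - covering_number n \<phi> k"
    using sum_delta_Suc_mod[OF k] k by (simp add: sum.delta)
  finally show ?thesis using z by simp
qed

lemma covering_number_eq_degree:
  assumes n3: "3 \<le> n" and c: "cycle_map n \<phi>"
  shows "k < n \<Longrightarrow> covering_number n \<phi> k = cycle_degree n \<phi>"
proof (induction k)
  case 0 then show ?case by (simp add: cycle_degree_def)
next
  case (Suc k)
  have "((Suc k) + n - 1) mod n = k" using Suc.prems by simp
  then show ?case using covering_number_pred[OF n3 c Suc.prems] Suc by simp
qed

text \<open>The constant covering number, summed over all n edges, counts each of the n source
  edges at most once.\<close>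
lemma cycle_degree_cases:
  assumes n3: "3 \<le> n" and c: "cycle_map n \<phi>"
  shows "cycle_degree n \<phi> \<in> {-1, 0, 1}"
proof -
  have "(\<Sum>j<n. covering_number n \<phi> j) = of_nat n * cycle_degree n \<phi>"
    using covering_number_eq_degree[OF n3 c] by simp
  moreover have "(\<Sum>j<n. covering_number n \<phi> j) = (\<Sum>i<n. \<Sum>j<n. edge_flow n \<phi> i j)"
    unfolding covering_number_def by (rule sum.swap)
  moreover have "\<bar>\<Sum>i<n. \<Sum>j<n. edge_flow n \<phi> i j\<bar> \<le> (\<Sum>i<n. 1)"
    by (rule order_trans[OF sum_abs]) (intro sum_mono abs_sum_edge_flow_le_1[OF n3 c]; simp)
  ultimately have "\<bar>of_nat n * cycle_degree n \<phi>\<bar> \<le> of_nat n" by simp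
  then have "of_nat n * \<bar>cycle_degree n \<phi>\<bar> \<le> of_nat n * 1" by (simp add: abs_mult)
  then have "\<bar>cycle_degree n \<phi>\<bar> \<le> 1" using n3 by (simp add: mult_le_cancel_left)
  then show ?thesis by auto
qed

lemma cyclic_adjacent_iff: "i < (n::nat) \<Longrightarrow> j < n \<Longrightarrow> (j = Suc i mod n \<or> i = Suc j mod n) \<longleftrightarrow>
   (j = Suc i \<or> i = Suc j \<or> (Suc i = n \<and> j = 0) \<or> (Suc j = n \<and> i = 0))"
  using Suc_mod_eq[of i n] Suc_mod_eq[of j n] by auto

lemma Suc_mod_neq: "2 \<le> n \<Longrightarrow> i < (n::nat) \<Longrightarrow> Suc i mod n \<noteq> i"
  using Suc_mod_eq[of i n] by auto

lemma no_cyclic_triangle: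
  assumes "4 \<le> n" "a < n" "b < n" "c < (n::nat)" "a \<noteq> b" "b \<noteq> c" "a \<noteq> c"
    "b = Suc a mod n \<or> a = Suc b mod n" "c = Suc b mod n \<or> b = Suc c mod n" "c = Suc a mod n \<or> a = Suc c mod n"
  shows False
proof -
  have h1: "b = Suc a \<or> a = Suc b \<or> (Suc a = n \<and> b = 0) \<or> (Suc b = n \<and> a = 0)"
    using cyclic_adjacent_iff[of a n b] assms by blast
  have h2: "c = Suc b \<or> b = Suc c \<or> (Suc b = n \<and> c = 0) \<or> (Suc c = n \<and> b = 0)"
    using cyclic_adjacent_iff[of b n c] assms by blast
  have h3: "c = Suc a \<or> a = Suc c \<or> (Suc a = n \<and> c = 0) \<or> (Suc c = n \<and> a = 0)"
    using cyclic_adjacent_iff[of a n c] assms by blast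
  show False using h1 h2 h3 assms(1-7) by (elim disjE conjE; linarith)
qed

lemma cyclic_square_length:
  assumes "3 \<le> n" "a < n" "b < n" "c < n" "d < (n::nat)" "a \<noteq> c" "b \<noteq> d"
    "b = Suc a mod n \<or> a = Suc b mod n" "c = Suc b mod n \<or> b = Suc c mod n"
    "d = Suc c mod n \<or> c = Suc d mod n" "a = Suc d mod n \<or> d = Suc a mod n"
  shows "n = 4"
proof -
  have h1: "b = Suc a \<or> a = Suc b \<or> (Suc a = n \<and> b = 0) \<or> (Suc b = n \<and> a = 0)"
    using cyclic_adjacent_iff[of a n b] assms by blast
  have h2: "c = Suc b \<or> b = Suc c \<or> (Suc b = n \<and> c = 0) \<or> (Suc c = n \<and> b = 0)"
    using cyclic_adjacent_iff[of b n c] assms by blast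
  have h3: "d = Suc c \<or> c = Suc d \<or> (Suc c = n \<and> d = 0) \<or> (Suc d = n \<and> c = 0)"
    using cyclic_adjacent_iff[of c n d] assms by blast
  have h4: "a = Suc d \<or> d = Suc a \<or> (Suc d = n \<and> a = 0) \<or> (Suc a = n \<and> d = 0)"
    using cyclic_adjacent_iff[of d n a] assms by blast
  show ?thesis using h1 h2 h3 h4 assms(1-7) by (elim disjE conjE; linarith)
qed

section \<open>Cell complexes built on a cycle\<close>

definition unit_chain :: "'c \<Rightarrow> 'c \<Rightarrow> rat" where
  "unit_chain s = (\<lambda>t. if t = s then 1 else 0)"

lemma chains_zero: "(\<lambda>_. 0) \<in> chains cells q"
  by (simp add: chains_def)

lemma chains_add: "u \<in> chains cells q \<Longrightarrow> w \<in> chains cells q \<Longrightarrow> (\<lambda>x. u x + w x) \<in> chains cells q"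
  by (simp add: chains_def)

lemma chains_scale: "u \<in> chains cells q \<Longrightarrow> (\<lambda>x. c * u x) \<in> chains cells q"
  by (simp add: chains_def)

lemma chains_empty: "cells q = {} \<Longrightarrow> chains cells q = {\<lambda>_. 0}"
  by (auto simp: chains_def)

lemma dmap_add: "dmap cells bd q (\<lambda>x. u x + w x) = (\<lambda>t. dmap cells bd q u t + dmap cells bd q w t)"
  by (auto simp: dmap_def algebra_simps sum.distrib)

lemma dmap_scale: "dmap cells bd q (\<lambda>x. c * u x) = (\<lambda>t. c * dmap cells bd q u t)"
  by (auto simp: dmap_def sum_distrib_left mult.assoc)

lemma dmap_zero: "dmap cells bd q (\<lambda>_. 0) = (\<lambda>_. 0)"
  by (auto simp: dmap_def)

lemma fmap_scale: "fmap cells fc q (\<lambda>x. c * u x) = (\<lambda>t. c * fmap cells fc q u t)"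
  by (auto simp: fmap_def sum_distrib_left mult.assoc)

lemma boundaries_zero: "(\<lambda>_. 0) \<in> boundaries cells bd q"
proof -
  have "(\<lambda>_. 0) = dmap cells bd (Suc q) (\<lambda>_. 0)" by (rule dmap_zero[symmetric])
  then show ?thesis unfolding boundaries_def using chains_zero by (rule image_eqI)
qed

lemma boundaries_add:
  assumes "u \<in> boundaries cells bd q" "w \<in> boundaries cells bd q"
  shows "(\<lambda>x. u x + w x) \<in> boundaries cells bd q"
proof -
  obtain a b where "a \<in> chains cells (Suc q)" "b \<in> chains cells (Suc q)"
    "u = dmap cells bd (Suc q) a" "w = dmap cells bd (Suc q) b"
    using assms by (auto simp: boundaries_def)
  then have "(\<lambda>x. u x + w x) = dmap cells bd (Suc q) (\<lambda>x. a x + b x)"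
    "(\<lambda>x. a x + b x) \<in> chains cells (Suc q)"
    by (simp_all add: dmap_add chains_add)
  then show ?thesis unfolding boundaries_def by (rule image_eqI)
qed

lemma boundaries_scale:
  assumes "u \<in> boundaries cells bd q"
  shows "(\<lambda>x. c * u x) \<in> boundaries cells bd q"
proof -
  obtain a where "a \<in> chains cells (Suc q)" "u = dmap cells bd (Suc q) a"
    using assms by (auto simp: boundaries_def)
  then have "(\<lambda>x. c * u x) = dmap cells bd (Suc q) (\<lambda>x. c * a x)"
    "(\<lambda>x. c * a x) \<in> chains cells (Suc q)"
    by (simp_all add: dmap_scale chains_scale)
  then show ?thesis unfolding boundaries_def by (rule image_eqI)
qed

abbreviation homology_trace ::
  "(nat \<Rightarrow> 'c set) \<Rightarrow> (nat \<Rightarrow> 'c \<Rightarrow> 'c \<Rightarrow> rat) \<Rightarrow> (nat \<Rightarrow> 'c \<Rightarrow> 'c \<Rightarrow> rat) \<Rightarrow> nat \<Rightarrow> rat" where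
  "homology_trace cells bd fc q \<equiv> quot_trace (cycles cells bd q) (boundaries cells bd q) (fmap cells fc q)"

lemma homology_trace_trivial:
  assumes "cycles cells bd q = {\<lambda>_. 0}" "boundaries cells bd q = {\<lambda>_. 0}"
  shows "homology_trace cells bd fc q = 0"
  by (rule quot_trace_trivial[of "[]"]) (auto simp: lin_indep_def lincomb_Nil assms)

lemma homology_trace_no_cells:
  assumes "cells q = {}" "cells (Suc q) = {}"
  shows "homology_trace cells bd fc q = 0"
  using assms by (intro homology_trace_trivial)
    (auto simp: cycles_def boundaries_def chains_empty dmap_zero)

lemma sum_atMost_truncate:
  assumes "K \<le> (N::nat)" "\<And>q. K < q \<Longrightarrow> f q = 0"
  shows "(\<Sum>q\<le>N. f q) = (\<Sum>q\<le>K. f q)"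
  using assms by (intro sum.mono_neutral_right) auto

text \<open>The sign sg i records the orientation chosen for the edge e i between v i and v (i+1).\<close>
locale cycle_complex =
  fixes n :: nat and cells :: "nat \<Rightarrow> 'c set" and bd :: "nat \<Rightarrow> 'c \<Rightarrow> 'c \<Rightarrow> rat"
    and v e :: "nat \<Rightarrow> 'c" and sg :: "nat \<Rightarrow> rat"
  assumes n3: "3 \<le> n"
    and v_inj: "inj_on v {..<n}" and cells0: "cells 0 = v ` {..<n}"
    and e_inj: "inj_on e {..<n}" and cells1: "cells 1 = e ` {..<n}"
    and sg_cases: "\<And>i. i < n \<Longrightarrow> sg i = 1 \<or> sg i = -1"
    and bd_edge: "\<And>i k. i < n \<Longrightarrow> k < n \<Longrightarrow> bd 1 (e i) (v k) =
        sg i * ((if k = Suc i mod n then 1 else 0) - (if k = i then 1 else 0))"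
begin

lemma n_pos: "0 < n"
  using n3 by simp

lemma sum_cells0: "(\<Sum>s\<in>cells 0. F s) = (\<Sum>k<n. F (v k))"
  unfolding cells0 by (simp add: sum.reindex[OF v_inj])

lemma sum_cells1: "(\<Sum>s\<in>cells (Suc 0). F s) = (\<Sum>k<n. F (e k))"
  using cells1 by (simp add: sum.reindex[OF e_inj])

lemma sg_square: "i < n \<Longrightarrow> sg i * sg i = 1"
  using sg_cases[of i] by auto

lemma v_eq_iff: "i < n \<Longrightarrow> j < n \<Longrightarrow> v i = v j \<longleftrightarrow> i = j"
  using v_inj by (auto dest: inj_onD)

lemma e_eq_iff: "i < n \<Longrightarrow> j < n \<Longrightarrow> e i = e j \<longleftrightarrow> i = j"
  using e_inj by (auto dest: inj_onD)

lemma v_in_cells0: "k < n \<Longrightarrow> v k \<in> cells 0"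
  using cells0 by auto

lemma e_in_cells1: "k < n \<Longrightarrow> e k \<in> cells 1"
  using cells1 by auto

lemma dmap1_vertex_sum:
  "k < n \<Longrightarrow> dmap cells bd (Suc 0) w (v k) = (\<Sum>i<n. w (e i) * bd (Suc 0) (e i) (v k))"
  unfolding dmap_def using v_in_cells0 by (simp add: sum_cells1)

lemma dmap1_vertex:
  assumes k: "k < n"
  shows "dmap cells bd 1 w (v k) =
    w (e ((k + n - 1) mod n)) * sg ((k + n - 1) mod n) - w (e k) * sg k"
proof -
  have "dmap cells bd 1 w (v k) = (\<Sum>i<n. w (e i) * bd 1 (e i) (v k))"
    using dmap1_vertex_sum[OF k] by simp
  also have "\<dots> = (\<Sum>i<n. (if k = Suc i mod n then w (e i) * sg i else 0)
      - (if k = i then w (e i) * sg i else 0))"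
    using bd_edge k by (intro sum.cong) auto
  finally show ?thesis
    using k by (simp add: sum_subtractf sum_delta_Suc_mod[OF k])
qed

definition fundamental_cycle :: "'c \<Rightarrow> rat" where
  "fundamental_cycle = (\<lambda>t. \<Sum>i<n. if t = e i then sg i else 0)"

lemma fundamental_cycle_edge: "j < n \<Longrightarrow> fundamental_cycle (e j) = sg j"
proof -
  assume j: "j < n"
  have "fundamental_cycle (e j) = (\<Sum>i<n. if i = j then sg i else 0)"
    unfolding fundamental_cycle_def using e_eq_iff[OF j] by (intro sum.cong) auto
  then show ?thesis using j by simp
qed

lemma fundamental_cycle_outside: "t \<notin> cells 1 \<Longrightarrow> fundamental_cycle t = 0"
  unfolding fundamental_cycle_def cells1 by (auto intro!: sum.neutral)

lemma fundamental_cycle_in_cycles1: "(\<lambda>t. a * fundamental_cycle t) \<in> cycles cells bd 1"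
proof -
  have "dmap cells bd 1 (\<lambda>t. a * fundamental_cycle t) t = 0" for t
  proof (cases "t \<in> cells 0")
    case True
    then obtain k where k: "k < n" "t = v k" using cells0 by auto
    have p: "(k + n - 1) mod n < n" using n_pos by simp
    show ?thesis
      using k dmap1_vertex[OF k(1)] fundamental_cycle_edge[OF k(1)] fundamental_cycle_edge[OF p]
        sg_square[OF k(1)] sg_square[OF p]
      by (simp add: mult.assoc)
  qed (simp add: dmap_def)
  then show ?thesis
    using fundamental_cycle_outside by (auto simp: cycles_def chains_def)
qed

lemma cycle1_eq_multiple:
  assumes w: "w \<in> cycles cells bd 1"
  shows "w = (\<lambda>t. (w (e 0) * sg 0) * fundamental_cycle t)"
proof
  define W where "W = (\<lambda>i. w (e i) * sg i)"
  have step: "W ((k + n - 1) mod n) = W k" if "k < n" for k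
    using w dmap1_vertex[OF that, of w] unfolding cycles_def W_def
    by (auto dest: fun_cong[where x = "v k"])
  have const: "W k = W 0" if "k < n" for k
    using that
  proof (induction k)
    case (Suc k)
    have "(Suc k + n - 1) mod n = k" using Suc.prems by simp
    then show ?case using step[OF Suc.prems] Suc by simp
  qed simp
  fix t
  show "w t = w (e 0) * sg 0 * fundamental_cycle t"
  proof (cases "t \<in> cells 1")
    case True
    then obtain i where i: "i < n" "t = e i" using cells1 by auto
    have "w t = W i * sg i" using i sg_square[OF i(1)] by (simp add: W_def mult.assoc)
    then have "w t = W 0 * fundamental_cycle t" using const[OF i(1)] fundamental_cycle_edge[OF i(1)] i by simp
    then show ?thesis by (simp add: W_def)
  next
    case False
    then show ?thesis using w fundamental_cycle_outside by (auto simp: cycles_def chains_def)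
  qed
qed

lemma cycles1_eq: "cycles cells bd 1 = range (\<lambda>a t. a * fundamental_cycle t)"
  using cycle1_eq_multiple fundamental_cycle_in_cycles1 by blast

lemma range_lincomb_fundamental_cycle: "range (lincomb [fundamental_cycle]) = range (\<lambda>a t. a * fundamental_cycle t)"
proof
  show "range (\<lambda>a t. a * fundamental_cycle t) \<subseteq> range (lincomb [fundamental_cycle])"
  proof (rule subsetI, elim rangeE)
    fix w a assume "w = (\<lambda>t. a * fundamental_cycle t)"
    then have "w = lincomb [fundamental_cycle] (\<lambda>_. a)" by (simp add: lincomb_single)
    then show "w \<in> range (lincomb [fundamental_cycle])" by blast
  qed
qed (auto simp: lincomb_single)

lemma pairing_fundamental_cycle_multiple: "pairing {e 0} (\<lambda>_. sg 0) (\<lambda>t. a * fundamental_cycle t) = a"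
  using fundamental_cycle_edge[OF n_pos] sg_square[OF n_pos] by (simp add: pairing_def)

lemma lin_indep_fundamental_cycle: "lin_indep [fundamental_cycle]"
  unfolding lin_indep_def
proof (rule allI, rule impI)
  fix a assume "lincomb [fundamental_cycle] a = (\<lambda>_. 0)"
  then have "pairing {e 0} (\<lambda>_. sg 0) (\<lambda>t. a 0 * fundamental_cycle t) = 0"
    by (simp add: lincomb_single pairing_def)
  then show "\<forall>i<length [fundamental_cycle]. a i = 0" using pairing_fundamental_cycle_multiple by simp
qed

lemma fmap1_fundamental_cycle:
  assumes \<phi>: "cycle_map n \<phi>"
    and fc1: "\<And>i j. i < n \<Longrightarrow> j < n \<Longrightarrow> fc 1 (e i) (e j) = sg i * sg j * of_int (edge_flow n \<phi> i j)"
  shows "fmap cells fc 1 fundamental_cycle = (\<lambda>t. of_int (cycle_degree n \<phi>) * fundamental_cycle t)"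
proof
  fix t
  show "fmap cells fc 1 fundamental_cycle t = of_int (cycle_degree n \<phi>) * fundamental_cycle t"
  proof (cases "t \<in> cells 1")
    case True
    then obtain j where j: "j < n" "t = e j" using cells1 by auto
    have "fmap cells fc 1 fundamental_cycle t = (\<Sum>i<n. fundamental_cycle (e i) * fc 1 (e i) (e j))"
      unfolding fmap_def using True j by (simp add: sum_cells1)
    also have "\<dots> = (\<Sum>i<n. sg j * of_int (edge_flow n \<phi> i j))"
      using fc1 j fundamental_cycle_edge sg_square by (intro sum.cong) (auto simp: mult.assoc[symmetric])
    also have "\<dots> = sg j * of_int (covering_number n \<phi> j)"
      by (simp add: covering_number_def sum_distrib_left)
    finally show ?thesis
      using covering_number_eq_degree[OF n3 \<phi> j(1)] fundamental_cycle_edge j by simp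
  qed (simp add: fundamental_cycle_outside fmap_def)
qed

text \<open>Evaluation at the edge e 0 detects the multiples of the fundamental cycle.\<close>
lemma homology_trace1_eq:
  assumes B1: "boundaries cells bd 1 = {\<lambda>_. 0}"
    and fundamental_cycle: "fmap cells fc 1 fundamental_cycle = (\<lambda>t. d * fundamental_cycle t)"
  shows "homology_trace cells bd fc 1 = d"
proof (rule quot_trace_dim_1[of "[]" fundamental_cycle _ _ _ "\<lambda>_. d" "{e 0}" "\<lambda>_. sg 0"])
  show "fmap cells fc 1 fundamental_cycle = lincomb ([] @ [fundamental_cycle]) (\<lambda>_. d)"
    using fundamental_cycle by (simp add: lincomb_single)
  show "pairing {e 0} (\<lambda>_. sg 0) w = 0 \<longleftrightarrow> w \<in> boundaries cells bd 1"
    if "w \<in> cycles cells bd 1" for w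
  proof -
    have "w \<in> range (\<lambda>a t. a * fundamental_cycle t)" using that cycles1_eq by simp
    then obtain a where w: "w = (\<lambda>t. a * fundamental_cycle t)" by auto
    have "w = (\<lambda>_. 0) \<longleftrightarrow> a = 0"
    proof
      assume "w = (\<lambda>_. 0)"
      then show "a = 0" using pairing_fundamental_cycle_multiple[of a] w by (simp add: pairing_def)
    qed (simp add: w)
    then show ?thesis using B1 w pairing_fundamental_cycle_multiple[of a] by simp
  qed
  show "\<exists>w\<in>cycles cells bd 1. pairing {e 0} (\<lambda>_. sg 0) w \<noteq> 0"
    using pairing_fundamental_cycle_multiple[of 1] fundamental_cycle_in_cycles1[of 1] by (intro bexI[of _ fundamental_cycle]) auto
  show "pairing {e 0} (\<lambda>_. sg 0) (fmap cells fc 1 w) = d * pairing {e 0} (\<lambda>_. sg 0) w"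
    if "w \<in> cycles cells bd 1" for w
  proof -
    have "w \<in> range (\<lambda>a t. a * fundamental_cycle t)" using that cycles1_eq by simp
    then obtain a where w: "w = (\<lambda>t. a * fundamental_cycle t)" by auto
    have "fmap cells fc 1 w = (\<lambda>t. (d * a) * fundamental_cycle t)"
      unfolding w fmap_scale fundamental_cycle by (simp add: mult_ac)
    then show ?thesis using w pairing_fundamental_cycle_multiple by simp
  qed
qed (use lin_indep_fundamental_cycle B1 range_lincomb_fundamental_cycle cycles1_eq in \<open>simp_all add: lincomb_Nil\<close>)

definition zero_sum_chains :: "('c \<Rightarrow> rat) set" where
  "zero_sum_chains = {c \<in> chains cells 0. (\<Sum>s\<in>cells 0. c s) = 0}"

lemma unit_chain_vertex: "i < n \<Longrightarrow> k < n \<Longrightarrow> unit_chain (v i) (v k) = (if k = i then 1 else 0)"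
  using v_eq_iff by (auto simp: unit_chain_def)

lemma unit_chain_outside0: "t \<notin> cells 0 \<Longrightarrow> i < n \<Longrightarrow> unit_chain (v i) t = 0"
  using v_in_cells0 by (auto simp: unit_chain_def)

lemma vertex_step_boundary:
  assumes k: "Suc k < n"
  shows "(\<lambda>t. unit_chain (v (Suc k)) t - unit_chain (v k) t) \<in> boundaries cells bd 0"
proof -
  have kn: "k < n" using k by simp
  let ?w = "\<lambda>t. sg k * unit_chain (e k) t"
  have "dmap cells bd (Suc 0) ?w = (\<lambda>t. unit_chain (v (Suc k)) t - unit_chain (v k) t)"
  proof
    fix t
    show "dmap cells bd (Suc 0) ?w t = unit_chain (v (Suc k)) t - unit_chain (v k) t"
    proof (cases "t \<in> cells 0")
      case True
      then obtain j where j: "j < n" "t = v j" using cells0 by auto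
      have "dmap cells bd (Suc 0) ?w t = (\<Sum>i<n. if i = k then sg k * bd (Suc 0) (e k) (v j) else 0)"
        unfolding dmap1_vertex_sum[OF j(1)] j(2)
        using e_eq_iff kn by (intro sum.cong) (auto simp: unit_chain_def)
      also have "\<dots> = (if j = Suc k then 1 else 0) - (if j = k then 1 else 0)"
        using bd_edge[OF kn j(1)] sg_square[OF kn] k kn by (simp add: mult.assoc[symmetric])
      finally show ?thesis
        using unit_chain_vertex k kn j by simp
    qed (use unit_chain_outside0 k kn in \<open>simp add: dmap_def\<close>)
  qed
  moreover have "?w \<in> chains cells (Suc 0)"
    using e_in_cells1[OF kn] by (auto simp: chains_def unit_chain_def)
  ultimately show ?thesis unfolding boundaries_def by (intro image_eqI[where x = ?w]) auto
qed

lemma vertex_diff_boundary: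
  "k < n \<Longrightarrow> (\<lambda>t. unit_chain (v k) t - unit_chain (v 0) t) \<in> boundaries cells bd 0"
proof (induction k)
  case (Suc k)
  then have "(\<lambda>t. (unit_chain (v k) t - unit_chain (v 0) t)
      + (unit_chain (v (Suc k)) t - unit_chain (v k) t)) \<in> boundaries cells bd 0"
    using boundaries_add[OF Suc.IH vertex_step_boundary[OF Suc.prems]] Suc.prems by simp
  then show ?case by simp
qed (simp add: boundaries_zero)

definition vertex_diffs :: "('c \<Rightarrow> rat) list" where
  "vertex_diffs = map (\<lambda>i t. unit_chain (v (Suc i)) t - unit_chain (v 0) t) [0..<n - 1]"

lemma length_vertex_diffs: "length vertex_diffs = n - 1"
  by (simp add: vertex_diffs_def)

lemma lincomb_vertex_diffs:
  "lincomb vertex_diffs a t = (\<Sum>i<n - 1. a i * (unit_chain (v (Suc i)) t - unit_chain (v 0) t))"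
  by (simp add: lincomb_def vertex_diffs_def)

lemma lincomb_vertex_diffs_v0: "lincomb vertex_diffs a (v 0) = - (\<Sum>i<n - 1. a i)"
proof -
  have "lincomb vertex_diffs a (v 0) = (\<Sum>i<n - 1. - a i)"
    unfolding lincomb_vertex_diffs using n_pos unit_chain_vertex by (intro sum.cong) auto
  then show ?thesis by (simp add: sum_negf)
qed

lemma lincomb_vertex_diffs_vSuc: "k < n - 1 \<Longrightarrow> lincomb vertex_diffs a (v (Suc k)) = a k"
proof -
  assume k: "k < n - 1"
  have "lincomb vertex_diffs a (v (Suc k)) = (\<Sum>i<n - 1. if i = k then a k else 0)"
    unfolding lincomb_vertex_diffs using k unit_chain_vertex by (intro sum.cong) auto
  then show ?thesis using k by simp
qed

lemma lincomb_vertex_diffs_outside: "t \<notin> cells 0 \<Longrightarrow> lincomb vertex_diffs a t = 0"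
  unfolding lincomb_vertex_diffs using unit_chain_outside0 by (intro sum.neutral) auto

lemma sum_lessThan_n_split: "(\<Sum>k<n. f k) = f 0 + (\<Sum>k<n - 1. f (Suc k))"
  using sum.lessThan_Suc_shift[of f "n - 1"] n_pos by simp

lemma lincomb_vertex_diffs_eq:
  assumes "c \<in> zero_sum_chains"
  shows "c = lincomb vertex_diffs (\<lambda>i. c (v (Suc i)))"
proof
  fix t
  show "c t = lincomb vertex_diffs (\<lambda>i. c (v (Suc i))) t"
  proof (cases "t \<in> cells 0")
    case True
    then obtain k where k: "k < n" "t = v k" using cells0 by auto
    show ?thesis
    proof (cases k)
      case 0
      have "c (v 0) + (\<Sum>k<n - 1. c (v (Suc k))) = 0"
        using assms by (simp add: zero_sum_chains_def sum_cells0 sum_lessThan_n_split)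
      then show ?thesis
        using k 0 lincomb_vertex_diffs_v0[of "\<lambda>i. c (v (Suc i))"] by (simp add: eq_neg_iff_add_eq_0)
    next
      case (Suc k')
      then show ?thesis using k lincomb_vertex_diffs_vSuc[of k'] by simp
    qed
  next
    case False
    then show ?thesis
      using assms lincomb_vertex_diffs_outside by (auto simp: zero_sum_chains_def chains_def)
  qed
qed

lemma range_lincomb_vertex_diffs: "range (lincomb vertex_diffs) = zero_sum_chains"
proof
  show "range (lincomb vertex_diffs) \<subseteq> zero_sum_chains"
  proof
    fix c assume "c \<in> range (lincomb vertex_diffs)"
    then obtain a where a: "c = lincomb vertex_diffs a" by auto
    have "(\<Sum>s\<in>cells 0. c s) = 0"
      unfolding sum_cells0 sum_lessThan_n_split[of "\<lambda>k. c (v k)"]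
      using a lincomb_vertex_diffs_v0 lincomb_vertex_diffs_vSuc by simp
    then show "c \<in> zero_sum_chains"
      using a lincomb_vertex_diffs_outside by (auto simp: zero_sum_chains_def chains_def)
  qed
  show "zero_sum_chains \<subseteq> range (lincomb vertex_diffs)"
    using lincomb_vertex_diffs_eq by blast
qed

lemma boundaries0_eq: "boundaries cells bd 0 = zero_sum_chains"
proof
  show "boundaries cells bd 0 \<subseteq> zero_sum_chains"
  proof
    fix c assume "c \<in> boundaries cells bd 0"
    then obtain w where w: "w \<in> chains cells (Suc 0)" "c = dmap cells bd (Suc 0) w"
      by (auto simp: boundaries_def)
    have "(\<Sum>s\<in>cells 0. c s) =
        (\<Sum>k<n. w (e ((k + n - 1) mod n)) * sg ((k + n - 1) mod n) - w (e k) * sg k)"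
      unfolding sum_cells0 using dmap1_vertex w(2) by (intro sum.cong) auto
    also have "\<dots> = 0"
      using sum_reindex_pred_mod[OF n_pos, of "\<lambda>i. w (e i) * sg i"] by (simp add: sum_subtractf)
    finally show "c \<in> zero_sum_chains"
      using w by (auto simp: zero_sum_chains_def chains_def dmap_def)
  qed
  show "zero_sum_chains \<subseteq> boundaries cells bd 0"
    unfolding range_lincomb_vertex_diffs[symmetric]
    by (auto simp: vertex_diffs_def intro!: lincomb_in_subspace vertex_diff_boundary
        boundaries_zero boundaries_add boundaries_scale)
qed

lemma cycles0_eq: "cycles cells bd 0 = chains cells 0"
  by (auto simp: cycles_def dmap_def)

lemma sum_unit_chain_v0: "(\<Sum>s\<in>cells 0. unit_chain (v 0) s) = 1"
  unfolding sum_cells0 using unit_chain_vertex n_pos by (simp add: sum.delta)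

lemma unit_chain_v0_in_chains0: "unit_chain (v 0) \<in> chains cells 0"
  using v_in_cells0[OF n_pos] by (auto simp: chains_def unit_chain_def)

lemma lin_indep_vertex_basis: "lin_indep (vertex_diffs @ [unit_chain (v 0)])"
  unfolding lin_indep_def
proof (rule allI, rule impI)
  fix a assume a: "lincomb (vertex_diffs @ [unit_chain (v 0)]) a = (\<lambda>_. 0)"
  have e: "lincomb (vertex_diffs @ [unit_chain (v 0)]) a
      = (\<lambda>x. lincomb vertex_diffs a x + a (n - 1) * unit_chain (v 0) x)"
    by (simp add: lincomb_append lincomb_single length_vertex_diffs)
  have "(\<Sum>s\<in>cells 0. lincomb vertex_diffs a s) = 0"
    using range_lincomb_vertex_diffs by (auto simp: zero_sum_chains_def)
  then have last: "a (n - 1) = 0"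
    using arg_cong[OF a, of "\<lambda>c. \<Sum>s\<in>cells 0. c s"]
    unfolding e sum.distrib sum_distrib_left[symmetric] sum_unit_chain_v0 by simp
  then have "lincomb vertex_diffs a = (\<lambda>_. 0)" using a e by (auto dest: fun_cong)
  then have "a i = 0" if "i < n - 1" for i
    using lincomb_vertex_diffs_vSuc[OF that, of a] by simp
  then show "\<forall>i<length (vertex_diffs @ [unit_chain (v 0)]). a i = 0"
    using last by (auto simp: length_vertex_diffs less_Suc_eq)
qed

lemma range_vertex_basis: "range (lincomb (vertex_diffs @ [unit_chain (v 0)])) = chains cells 0"
proof
  show "range (lincomb (vertex_diffs @ [unit_chain (v 0)])) \<subseteq> chains cells 0"
  proof (rule subsetI, elim rangeE)
    fix c a assume c: "c = lincomb (vertex_diffs @ [unit_chain (v 0)]) a"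
    have "(vertex_diffs @ [unit_chain (v 0)]) ! i \<in> chains cells 0"
      if "i < length (vertex_diffs @ [unit_chain (v 0)])" for i
      using that unit_chain_outside0 unit_chain_v0_in_chains0
      by (auto simp: nth_append vertex_diffs_def chains_def length_vertex_diffs)
    then show "c \<in> chains cells 0"
      unfolding c by (rule lincomb_in_subspace) (auto intro: chains_zero chains_add chains_scale)
  qed
  show "chains cells 0 \<subseteq> range (lincomb (vertex_diffs @ [unit_chain (v 0)]))"
  proof
    fix c assume c: "c \<in> chains cells 0"
    define s where "s = (\<Sum>x\<in>cells 0. c x)"
    have "(\<Sum>x\<in>cells 0. c x + - s * unit_chain (v 0) x) = 0"
      unfolding sum.distrib sum_distrib_left[symmetric] sum_unit_chain_v0 s_def by simp
    then have "(\<lambda>x. c x + - s * unit_chain (v 0) x) \<in> zero_sum_chains"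
      using c unit_chain_outside0[OF _ n_pos] by (simp add: zero_sum_chains_def chains_def)
    then obtain a where a: "(\<lambda>x. c x + - s * unit_chain (v 0) x) = lincomb vertex_diffs a"
      using range_lincomb_vertex_diffs by auto
    have "lincomb vertex_diffs (a(n - 1 := s)) = lincomb vertex_diffs a"
      by (rule lincomb_cong) (simp add: length_vertex_diffs)
    then have "lincomb (vertex_diffs @ [unit_chain (v 0)]) (a(n - 1 := s))
        = (\<lambda>x. lincomb vertex_diffs a x + s * unit_chain (v 0) x)"
      by (simp add: lincomb_append lincomb_single length_vertex_diffs)
    also have "\<dots> = c"
      using a[symmetric] by (auto dest: fun_cong)
    finally have "lincomb (vertex_diffs @ [unit_chain (v 0)]) (a(n - 1 := s)) = c" .
    then show "c \<in> range (lincomb (vertex_diffs @ [unit_chain (v 0)]))" by blast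
  qed
qed

text \<open>The augmentation, summing the coefficients of a 0-chain, has kernel the boundaries and
  is preserved by any chain map sending vertices to vertices.\<close>
lemma homology_trace0_eq:
  assumes \<phi>: "\<And>k. k < n \<Longrightarrow> \<phi> k < n"
    and fc0: "\<And>k k'. k < n \<Longrightarrow> k' < n \<Longrightarrow> fc 0 (v k) (v k') = (if k' = \<phi> k then 1 else 0)"
  shows "homology_trace cells bd fc 0 = 1"
proof -
  have pairing_cells0: "pairing (cells 0) (\<lambda>_. 1) w = (\<Sum>s\<in>cells 0. w s)" for w
    by (simp add: pairing_def)
  have "fmap cells fc 0 (unit_chain (v 0)) \<in> chains cells 0"
    by (auto simp: fmap_def chains_def)
  then obtain a0 where a0: "fmap cells fc 0 (unit_chain (v 0)) = lincomb (vertex_diffs @ [unit_chain (v 0)]) a0"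
    using range_vertex_basis by auto
  show ?thesis
  proof (rule quot_trace_dim_1[of vertex_diffs "unit_chain (v 0)" _ _ "fmap cells fc 0" a0
        "cells 0" "\<lambda>_. 1"])
    show "pairing (cells 0) (\<lambda>_. 1) (fmap cells fc 0 w) = 1 * pairing (cells 0) (\<lambda>_. 1) w" for w
    proof -
      have "pairing (cells 0) (\<lambda>_. 1) (fmap cells fc 0 w) = (\<Sum>t\<in>cells 0. \<Sum>s\<in>cells 0. w s * fc 0 s t)"
        by (simp add: pairing_cells0 fmap_def)
      also have "\<dots> = (\<Sum>s\<in>cells 0. \<Sum>t\<in>cells 0. w s * fc 0 s t)"
        by (rule sum.swap)
      also have "\<dots> = (\<Sum>s\<in>cells 0. w s)"
        unfolding sum_cells0
      proof (intro sum.cong refl)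
        fix k assume k: "k \<in> {..<n}"
        have "(\<Sum>k'<n. w (v k) * fc 0 (v k) (v k')) = (\<Sum>k'<n. if k' = \<phi> k then w (v k) else 0)"
          using fc0 k by (intro sum.cong) auto
        also have "\<dots> = w (v k)" using \<phi> k by simp
        finally show "(\<Sum>k'<n. w (v k) * fc 0 (v k) (v k')) = w (v k)" .
      qed
      finally show ?thesis by (simp add: pairing_cells0)
    qed
    show "pairing (cells 0) (\<lambda>_. 1) w = 0 \<longleftrightarrow> w \<in> boundaries cells bd 0"
      if "w \<in> cycles cells bd 0" for w
      using that by (simp add: pairing_cells0 boundaries0_eq zero_sum_chains_def cycles0_eq)
    show "\<exists>w\<in>cycles cells bd 0. pairing (cells 0) (\<lambda>_. 1) w \<noteq> 0"
      unfolding pairing_cells0 cycles0_eq using sum_unit_chain_v0 unit_chain_v0_in_chains0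
      by (intro bexI[of _ "unit_chain (v 0)"]) auto
  qed (use lin_indep_vertex_basis a0 range_lincomb_vertex_diffs boundaries0_eq range_vertex_basis
      cycles0_eq in simp_all)
qed

lemma lefschetz_hollow:
  assumes \<phi>: "cycle_map n \<phi>"
    and fc0: "\<And>k k'. k < n \<Longrightarrow> k' < n \<Longrightarrow> fc 0 (v k) (v k') = (if k' = \<phi> k then 1 else 0)"
    and fc1: "\<And>i j. i < n \<Longrightarrow> j < n \<Longrightarrow> fc 1 (e i) (e j) = sg i * sg j * of_int (edge_flow n \<phi> i j)"
    and no_cells: "\<And>q. 2 \<le> q \<Longrightarrow> cells q = {}"
    and N: "1 \<le> N"
  shows "lefschetz cells bd fc N = 1 - of_int (cycle_degree n \<phi>)"
proof -
  have "boundaries cells bd 1 = {\<lambda>_. 0}"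
    using no_cells[of 2] by (auto simp: boundaries_def chains_empty dmap_zero numeral_2_eq_2)
  then have "homology_trace cells bd fc 1 = of_int (cycle_degree n \<phi>)"
    using homology_trace1_eq fmap1_fundamental_cycle[of \<phi> fc, OF \<phi> fc1] by blast
  moreover have "homology_trace cells bd fc 0 = 1"
    using \<phi> by (intro homology_trace0_eq[of \<phi> fc, OF _ fc0]) (simp add: cycle_map_def)
  moreover have "lefschetz cells bd fc N = (\<Sum>q\<le>1. (-1) ^ q * homology_trace cells bd fc q)"
    unfolding lefschetz_def using N no_cells
    by (intro sum_atMost_truncate) (auto intro!: homology_trace_no_cells)
  ultimately show ?thesis by simp
qed

end

text \<open>A cycle complex with a single 2-cell T whose boundary runs around the cycle.\<close>
locale filled_cycle_complex = cycle_complex +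
  fixes T
  assumes cells2: "cells 2 = {T}"
    and no_cells: "\<And>q. 3 \<le> q \<Longrightarrow> cells q = {}"
    and bd_bd_T: "\<And>k. k < n \<Longrightarrow> (\<Sum>i<n. bd 2 T (e i) * bd 1 (e i) (v k)) = 0"
    and bd_T_nonzero: "\<exists>i<n. bd 2 T (e i) \<noteq> 0"
begin

lemma dmap2_unit_chain: "dmap cells bd 2 (\<lambda>t. a * unit_chain T t) = (\<lambda>t. a * dmap cells bd 2 (unit_chain T) t)"
  using dmap_scale[of cells bd 2 a "unit_chain T"] by simp

lemma chains2_eq: "chains cells 2 = range (\<lambda>a t. a * unit_chain T t)"
proof
  show "chains cells 2 \<subseteq> range (\<lambda>a t. a * unit_chain T t)"
  proof
    fix c assume "c \<in> chains cells 2"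
    then have "c = (\<lambda>t. c T * unit_chain T t)" by (auto simp: chains_def cells2 unit_chain_def)
    then show "c \<in> range (\<lambda>a t. a * unit_chain T t)" by blast
  qed
qed (auto simp: chains_def cells2 unit_chain_def)

lemma dmap2_T_edge: "i < n \<Longrightarrow> dmap cells bd 2 (unit_chain T) (e i) = bd 2 T (e i)"
  using e_in_cells1 by (simp add: dmap_def cells2 unit_chain_def)

lemma boundary_T_eq_multiple: "\<exists>\<epsilon>. \<epsilon> \<noteq> 0 \<and> dmap cells bd 2 (unit_chain T) = (\<lambda>t. \<epsilon> * fundamental_cycle t)"
proof -
  let ?W = "dmap cells bd 2 (unit_chain T)"
  have "dmap cells bd 1 ?W t = 0" for t
  proof (cases "t \<in> cells 0")
    case True
    then obtain k where k: "k < n" "t = v k" using cells0 by auto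
    have "dmap cells bd 1 ?W t = (\<Sum>i<n. bd 2 T (e i) * bd 1 (e i) (v k))"
      using dmap1_vertex_sum[OF k(1)] k dmap2_T_edge by simp
    then show ?thesis using bd_bd_T[OF k(1)] by simp
  qed (simp add: dmap_def)
  then have "?W \<in> cycles cells bd 1"
    by (auto simp: cycles_def chains_def dmap_def)
  then obtain \<epsilon> where \<epsilon>: "?W = (\<lambda>t. \<epsilon> * fundamental_cycle t)" using cycles1_eq by auto
  obtain i where "i < n" "bd 2 T (e i) \<noteq> 0" using bd_T_nonzero by auto
  then have "\<epsilon> \<noteq> 0" using \<epsilon> dmap2_T_edge by (metis mult_zero_left)
  then show ?thesis using \<epsilon> by blast
qed

lemma boundaries1_eq_cycles1: "boundaries cells bd 1 = cycles cells bd 1"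
proof -
  obtain \<epsilon> where \<epsilon>: "\<epsilon> \<noteq> 0" "dmap cells bd 2 (unit_chain T) = (\<lambda>t. \<epsilon> * fundamental_cycle t)"
    using boundary_T_eq_multiple by blast
  have "boundaries cells bd 1 = range (\<lambda>a. dmap cells bd 2 (\<lambda>t. a * unit_chain T t))"
    unfolding boundaries_def Suc_1 chains2_eq image_image ..
  also have "\<dots> = range (\<lambda>a t. (a * \<epsilon>) * fundamental_cycle t)"
    by (simp add: dmap2_unit_chain \<epsilon>(2) mult.assoc)
  also have "\<dots> = range (\<lambda>a t. a * fundamental_cycle t)"
  proof
    show "range (\<lambda>a t. a * fundamental_cycle t) \<subseteq> range (\<lambda>a t. (a * \<epsilon>) * fundamental_cycle t)"
    proof (rule subsetI, elim rangeE)
      fix w a assume "w = (\<lambda>t. a * fundamental_cycle t)"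
      then have "w = (\<lambda>t. ((a / \<epsilon>) * \<epsilon>) * fundamental_cycle t)" using \<epsilon>(1) by simp
      then show "w \<in> range (\<lambda>a t. (a * \<epsilon>) * fundamental_cycle t)" by blast
    qed
  qed auto
  finally show ?thesis using cycles1_eq by simp
qed

lemma cycles2_eq: "cycles cells bd 2 = {\<lambda>_. 0}"
proof -
  obtain \<epsilon> where \<epsilon>: "\<epsilon> \<noteq> 0" "dmap cells bd 2 (unit_chain T) = (\<lambda>t. \<epsilon> * fundamental_cycle t)"
    using boundary_T_eq_multiple by blast
  have "a = 0" if "(\<lambda>t. a * (\<epsilon> * fundamental_cycle t)) = (\<lambda>_. 0)" for a
    using fun_cong[OF that, of "e 0"] \<epsilon>(1) fundamental_cycle_edge[OF n_pos] sg_cases[OF n_pos] by auto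
  then have "cycles cells bd 2 \<subseteq> {\<lambda>_. 0}"
    unfolding cycles_def chains2_eq by (auto simp: dmap2_unit_chain \<epsilon>(2))
  then show ?thesis
    by (auto simp: cycles_def chains_zero dmap_zero)
qed

lemma lefschetz_filled:
  assumes \<phi>: "\<And>k. k < n \<Longrightarrow> \<phi> k < n"
    and fc0: "\<And>k k'. k < n \<Longrightarrow> k' < n \<Longrightarrow> fc 0 (v k) (v k') = (if k' = \<phi> k then 1 else 0)"
    and N: "2 \<le> N"
  shows "lefschetz cells bd fc N = 1"
proof -
  have "homology_trace cells bd fc 1 = 0"
    using boundaries1_eq_cycles1 cycles1_eq range_lincomb_fundamental_cycle lin_indep_fundamental_cycle
    by (intro quot_trace_trivial[of "[fundamental_cycle]"]) simp_all
  moreover have "homology_trace cells bd fc 2 = 0"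
    using no_cells[of 3] cycles2_eq
    by (intro homology_trace_trivial) (auto simp: boundaries_def chains_empty dmap_zero numeral_3_eq_3)
  moreover have "lefschetz cells bd fc N = (\<Sum>q\<le>2. (-1) ^ q * homology_trace cells bd fc q)"
    unfolding lefschetz_def using N no_cells
    by (intro sum_atMost_truncate) (auto intro!: homology_trace_no_cells)
  ultimately show ?thesis
    using homology_trace0_eq[of \<phi> fc, OF \<phi> fc0] by (simp add: numeral_2_eq_2)
qed

end

section \<open>Digital cycles\<close>

lemma digital_cycle_adj: "digital_cycle X adj n x \<Longrightarrow> i < n \<Longrightarrow> j < n \<Longrightarrow>
   adj (x i) (x j) \<longleftrightarrow> (j = Suc i mod n \<or> i = Suc j mod n)"
  by (simp add: digital_cycle_def)

lemma digital_cycle_inj: "digital_cycle X adj n x \<Longrightarrow> inj_on x {..<n}"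
  by (simp add: digital_cycle_def)

lemma digital_cycle_range: "digital_cycle X adj n x \<Longrightarrow> X = x ` {..<n}"
  by (simp add: digital_cycle_def)

lemma inj_on_lessThan_eq_iff: "inj_on x {..<n} \<Longrightarrow> p < n \<Longrightarrow> q < n \<Longrightarrow> x p = x q \<longleftrightarrow> p = q"
  by (auto dest: inj_onD)

lemma cyclic_edge_eq_imp_eq:
  assumes n3: "3 \<le> n" and inj: "inj_on x {..<n}" and i: "i < n" and j: "j < n"
    and eq: "{x i, x (Suc i mod n)} = {x j, x (Suc j mod n)}"
  shows "i = j"
proof -
  have n0: "0 < n" using n3 by simp
  have l: "Suc i mod n < n" "Suc j mod n < n" using n0 by auto
  from eq have "(x i = x j \<and> x (Suc i mod n) = x (Suc j mod n)) \<or> (x i = x (Suc j mod n) \<and> x (Suc i mod n) = x j)"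
    by (simp add: doubleton_eq_iff)
  then have "i = j \<or> (i = Suc j mod n \<and> Suc i mod n = j)"
    using inj_on_lessThan_eq_iff[OF inj] i j l by auto
  then show ?thesis using Suc_Suc_mod_neq[OF n3 j] by auto
qed

definition index_map :: "nat \<Rightarrow> (nat \<Rightarrow> 'a) \<Rightarrow> ('a \<Rightarrow> 'a) \<Rightarrow> nat \<Rightarrow> nat" where
  "index_map n x f k = (SOME k'. k' < n \<and> f (x k) = x k')"

lemma index_map_spec:
  assumes dc: "digital_cycle X adj n x" and fX: "f ` X \<subseteq> X" and k: "k < n"
  shows "index_map n x f k < n \<and> f (x k) = x (index_map n x f k)"
proof -
  have "f (x k) \<in> X" using fX digital_cycle_range[OF dc] k by auto
  then obtain k' where "k' < n" "f (x k) = x k'" using digital_cycle_range[OF dc] by auto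
  then have "\<exists>k'. k' < n \<and> f (x k) = x k'" by blast
  then show ?thesis unfolding index_map_def by (rule someI_ex)
qed

lemma cycle_map_index_map:
  assumes n3: "3 \<le> n" and dc: "digital_cycle X adj n x" and fc: "digital_continuous X adj f"
  shows "cycle_map n (index_map n x f)"
proof -
  let ?p = "index_map n x f"
  have fX: "f ` X \<subseteq> X" using fc by (simp add: digital_continuous_def)
  have inj: "inj_on x {..<n}" using digital_cycle_inj[OF dc] .
  have n0: "0 < n" using n3 by simp
  have P: "\<And>k. k < n \<Longrightarrow> ?p k < n \<and> f (x k) = x (?p k)" using index_map_spec[OF dc fX] by blast
  show ?thesis unfolding cycle_map_def
  proof (intro conjI allI impI)
    fix k assume "k < n" then show "?p k < n" using P by blast
  next
    fix i assume i: "i < n"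
    let ?j = "Suc i mod n"
    have j: "?j < n" using n0 by simp
    have a: "adj (x i) (x ?j)" using digital_cycle_adj[OF dc i j] by simp
    have "x i \<in> X" "x ?j \<in> X" using digital_cycle_range[OF dc] i j by auto
    then have "f (x i) = f (x ?j) \<or> adj (f (x i)) (f (x ?j))"
      using fc a unfolding digital_continuous_def by blast
    then have "x (?p i) = x (?p ?j) \<or> adj (x (?p i)) (x (?p ?j))" using P i j by simp
    then show "?p ?j = ?p i \<or> ?p ?j = Suc (?p i) mod n \<or> ?p i = Suc (?p ?j) mod n"
      using inj_on_lessThan_eq_iff[OF inj] digital_cycle_adj[OF dc] P i j by (metis)
  qed
qed

definition edge_tail :: "nat \<Rightarrow> (nat \<Rightarrow> 'a) \<Rightarrow> rat \<Rightarrow> nat \<Rightarrow> 'a" where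
  "edge_tail n x s i = (if s = 1 then x i else x (Suc i mod n))"

definition edge_head :: "nat \<Rightarrow> (nat \<Rightarrow> 'a) \<Rightarrow> rat \<Rightarrow> nat \<Rightarrow> 'a" where
  "edge_head n x s i = (if s = 1 then x (Suc i mod n) else x i)"

definition oriented_image_coeff :: "('a \<Rightarrow> 'a) \<Rightarrow> 'a \<Rightarrow> 'a \<Rightarrow> 'a \<Rightarrow> 'a \<Rightarrow> rat" where
  "oriented_image_coeff f a b c d = (if {f a, f b} = {c, d} then if f a = c then 1 else -1 else 0)"

lemma oriented_image_coeff_edge:
  assumes n3: "3 \<le> n" and inj: "inj_on x {..<n}" and c: "cycle_map n \<phi>"
    and fx: "\<And>k. k < n \<Longrightarrow> f (x k) = x (\<phi> k)" and i: "i < n" and j: "j < n"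
    and oi: "oi = 1 \<or> oi = -1" and oj: "oj = 1 \<or> oj = -1"
  shows "oriented_image_coeff f (edge_tail n x oi i) (edge_head n x oi i)
      (edge_tail n x oj j) (edge_head n x oj j) = oi * oj * of_int (edge_flow n \<phi> i j)"
proof -
  have n0: "0 < n" using n3 by simp
  define i' where "i' = Suc i mod n"
  define j' where "j' = Suc j mod n"
  define p where "p = \<phi> i"
  define q where "q = \<phi> i'"
  have l: "i' < n" "j' < n" "p < n" "q < n"
    using n0 c i unfolding i'_def j'_def p_def q_def cycle_map_def by auto
  have fi: "f (x i) = x p" "f (x i') = x q" using fx i l unfolding p_def q_def by auto
  have pn: "Suc p mod n < n" and qn: "Suc q mod n < n" using n0 by simp_all
  have jj: "j' \<noteq> j" "Suc j' mod n \<noteq> j"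
    using Suc_mod_neq[of n j] Suc_Suc_mod_neq[OF n3 j] n3 j unfolding j'_def by auto
  have cc: "q = p \<or> q = Suc p mod n \<or> p = Suc q mod n"
    using c i unfolding cycle_map_def p_def q_def i'_def by auto
  have pp: "Suc p mod n \<noteq> p" "Suc (Suc p mod n) mod n \<noteq> p"
    "Suc q mod n \<noteq> q" "Suc (Suc q mod n) mod n \<noteq> q"
    using Suc_mod_neq[of n p] Suc_mod_neq[of n q] Suc_Suc_mod_neq[OF n3, of p]
      Suc_Suc_mod_neq[OF n3, of q] n3 l by auto
  have xe: "\<And>a b. a < n \<Longrightarrow> b < n \<Longrightarrow> x a = x b \<longleftrightarrow> a = b"
    using inj_on_lessThan_eq_iff[OF inj] by blast
  have flow: "edge_flow n \<phi> i j =
      (if q = Suc p mod n \<and> j = p then 1 else if p = Suc q mod n \<and> j = q then -1 else 0)"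
    unfolding edge_flow_def p_def q_def i'_def by simp
  show ?thesis
    unfolding flow oriented_image_coeff_def edge_tail_def edge_head_def i'_def[symmetric] j'_def[symmetric]
    using oi oj cc fi l pn qn jj pp j
    by (auto simp: doubleton_eq_iff xe j'_def)
qed

lemma three_distinct_elems:
  assumes "3 \<le> card s"
  obtains a b c where "a \<in> s" "b \<in> s" "c \<in> s" "a \<noteq> b" "b \<noteq> c" "a \<noteq> c"
proof -
  obtain t where "t \<subseteq> s" "card t = 3" using obtain_subset_with_card_n[OF assms] by metis
  then show ?thesis using that by (auto simp: card_3_iff)
qed

lemma two_distinct_elems:
  assumes "2 \<le> card s"
  obtains a b where "a \<in> s" "b \<in> s" "a \<noteq> b"
proof -
  obtain t where "t \<subseteq> s" "card t = 2" using obtain_subset_with_card_n[OF assms] by metis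
  then show ?thesis using that by (auto simp: card_2_iff)
qed

locale digital_n_cycle =
  fixes X :: "'a set" and adj :: "'a \<Rightarrow> 'a \<Rightarrow> bool" and n :: nat and x :: "nat \<Rightarrow> 'a"
  assumes dc: "digital_cycle X adj n x" and n3: "3 \<le> n"
begin

lemma n_pos: "0 < n"
  using n3 by simp

lemma x_inj: "inj_on x {..<n}"
  using digital_cycle_inj[OF dc] .

lemma X_eq: "X = x ` {..<n}"
  using digital_cycle_range[OF dc] .

lemma finite_X: "finite X"
  using X_eq by simp

lemma card_X: "card X = n"
  using X_eq x_inj by (simp add: card_image)

lemma x_eq_iff: "p < n \<Longrightarrow> q < n \<Longrightarrow> x p = x q \<longleftrightarrow> p = q"
  using inj_on_lessThan_eq_iff[OF x_inj] by blast

lemma Suc_mod_less: "Suc i mod n < n"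
  using n_pos by simp

lemma x_neq_x_Suc: "i < n \<Longrightarrow> x i \<noteq> x (Suc i mod n)"
  using x_eq_iff[of i "Suc i mod n"] Suc_mod_less Suc_mod_neq[of n i] n3 by auto

lemma x_in_X: "k < n \<Longrightarrow> x k \<in> X"
  using X_eq by auto

abbreviation \<phi> :: "('a \<Rightarrow> 'a) \<Rightarrow> nat \<Rightarrow> nat" where
  "\<phi> f \<equiv> index_map n x f"

lemma index_map_x:
  assumes "f ` X \<subseteq> X" "k < n"
  shows "\<phi> f k < n" "f (x k) = x (\<phi> f k)"
  using index_map_spec[OF dc assms] by auto

lemma adj_triangle: "n = 3 \<Longrightarrow> a \<in> X \<Longrightarrow> b \<in> X \<Longrightarrow> a \<noteq> b \<Longrightarrow> adj a b"
proof -
  assume n: "n = 3" and a: "a \<in> X" and b: "b \<in> X" and ab: "a \<noteq> b"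
  obtain i j where ij: "i < n" "j < n" "a = x i" "b = x j" using a b X_eq by auto
  have "i \<noteq> j" using ab ij by auto
  moreover have "i = 0 \<or> i = 1 \<or> i = 2" "j = 0 \<or> j = 1 \<or> j = 2" using ij n by linarith+
  ultimately have "j = Suc i mod 3 \<or> i = Suc j mod 3" by (elim disjE) simp_all
  then show ?thesis using digital_cycle_adj[OF dc ij(1,2)] ij n by simp
qed

end

section \<open>Simplicial homology of a digital cycle\<close>

lemma orient_distinct_set: "finite s \<Longrightarrow> distinct (orient s) \<and> set (orient s) = s"
  unfolding orient_def by (rule someI_ex) (metis finite_distinct_list)

lemma orient_singleton: "orient {a} = [a]"
proof -
  have d: "distinct (orient {a}) \<and> set (orient {a}) = {a}" by (rule orient_distinct_set) simp
  then have "length (orient {a}) = 1" using distinct_card[of "orient {a}"] by simp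
  then obtain y where "orient {a} = [y]" by (cases "orient {a}") auto
  then show ?thesis using d by simp
qed

lemma orient_doubleton: "a \<noteq> b \<Longrightarrow> orient {a, b} = [a, b] \<or> orient {a, b} = [b, a]"
proof -
  assume ab: "a \<noteq> b"
  have d: "distinct (orient {a, b}) \<and> set (orient {a, b}) = {a, b}" by (rule orient_distinct_set) simp
  then have "length (orient {a, b}) = 2" using ab distinct_card[of "orient {a, b}"] by simp
  then obtain c d where "orient {a, b} = [c, d]"
    by (cases "orient {a, b}"; cases "tl (orient {a, b})") auto
  then show ?thesis using d ab by (auto simp: doubleton_eq_iff)
qed

lemma relsign_nonzero: "relsign xs ys \<noteq> 0"
  by (simp add: relsign_def)

lemma relsign_singleton: "relsign [a] [a] = 1"
  by (simp add: relsign_def)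

lemma relsign_doubleton:
  assumes cd: "c \<noteq> d" and eq: "{p, q} = {c, d}"
  shows "relsign [p, q] [c, d] = (if p = c then 1 else -1)"
proof (cases "p = c")
  case True
  then have "q = d" using eq cd by (auto simp: doubleton_eq_iff)
  then have E: "{(i, j). i < j \<and> j < length [p, q] \<and> (\<exists>k l. l < k \<and> k < length [c, d] \<and>
      [c, d] ! k = [p, q] ! i \<and> [c, d] ! l = [p, q] ! j)} = {}"
    using True cd by (auto simp: less_Suc_eq numeral_2_eq_2)
  show ?thesis unfolding relsign_def E using True by simp
next
  case False
  then have pq: "p = d" "q = c" using eq cd by (auto simp: doubleton_eq_iff)
  have E: "{(i, j). i < j \<and> j < length [p, q] \<and> (\<exists>k l. l < k \<and> k < length [c, d] \<and>
      [c, d] ! k = [p, q] ! i \<and> [c, d] ! l = [p, q] ! j)} = {(0, 1)}"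
  proof
    have "(0::nat) < 1 \<and> (1::nat) < length [p, q] \<and> (0::nat) < 1 \<and> (1::nat) < length [c, d] \<and>
      [c, d] ! 1 = [p, q] ! 0 \<and> [c, d] ! 0 = [p, q] ! 1" using pq by simp
    then show "{(0, 1)} \<subseteq> {(i, j). i < j \<and> j < length [p, q] \<and> (\<exists>k l. l < k \<and> k < length [c, d] \<and>
      [c, d] ! k = [p, q] ! i \<and> [c, d] ! l = [p, q] ! j)}" by blast
  qed (use pq cd in \<open>auto simp: less_Suc_eq numeral_2_eq_2\<close>)
  show ?thesis unfolding relsign_def E using False by simp
qed

definition edge_boundary :: "'a \<Rightarrow> 'a \<Rightarrow> 'a \<Rightarrow> rat" where
  "edge_boundary a b u = (if u = b then 1 else 0) - (if u = a then 1 else 0)"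

lemma relsign_edge_boundary:
  assumes ab: "a \<noteq> b" and eq: "{p, q} = {a, b}"
  shows "relsign [p, q] [a, b] * edge_boundary a b u = edge_boundary p q u"
  using relsign_doubleton[OF ab eq] eq ab by (auto simp: edge_boundary_def doubleton_eq_iff)

lemma simp_bd_edge:
  assumes "orient s = [a, b]" "a \<noteq> b"
  shows "simp_bd q s {u} = edge_boundary a b u"
  unfolding simp_bd_def assms(1)
  by (simp add: remove_nth_def orient_singleton relsign_singleton edge_boundary_def)

lemma simp_bd_triangle:
  assumes "orient s = [p, q, r]"
  shows "simp_bd k s t = (if t = {q, r} then relsign [q, r] (orient t) else 0)
     - (if t = {p, r} then relsign [p, r] (orient t) else 0)
     + (if t = {p, q} then relsign [p, q] (orient t) else 0)"
  by (simp only: simp_bd_def assms length_Cons list.size(3) sum.lessThan_Suc lessThan_0 sum.empty)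
     (simp add: remove_nth_def)

locale simplicial_cycle = digital_n_cycle
begin

definition vertex_simplex :: "nat \<Rightarrow> 'a set" where
  "vertex_simplex k = {x k}"

definition edge_simplex :: "nat \<Rightarrow> 'a set" where
  "edge_simplex i = {x i, x (Suc i mod n)}"

definition edge_sign :: "nat \<Rightarrow> rat" where
  "edge_sign i = (if orient (edge_simplex i) = [x i, x (Suc i mod n)] then 1 else -1)"

abbreviation tail :: "nat \<Rightarrow> 'a" where "tail i \<equiv> edge_tail n x (edge_sign i) i"
abbreviation head :: "nat \<Rightarrow> 'a" where "head i \<equiv> edge_head n x (edge_sign i) i"

lemma edge_sign_cases: "edge_sign i = 1 \<or> edge_sign i = -1"
  by (simp add: edge_sign_def)

lemma orient_edge_simplex: "i < n \<Longrightarrow> orient (edge_simplex i) = [tail i, head i]"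
  using orient_doubleton[OF x_neq_x_Suc[of i]]
  by (auto simp: edge_sign_def edge_simplex_def edge_tail_def edge_head_def)

lemma edge_simplex_eq: "edge_simplex i = {tail i, head i}"
  by (auto simp: edge_tail_def edge_head_def edge_simplex_def)

lemma tail_neq_head: "i < n \<Longrightarrow> tail i \<noteq> head i"
  using x_neq_x_Suc[of i] by (auto simp: edge_tail_def edge_head_def)

lemma simplices0_eq: "simplices X adj 0 = vertex_simplex ` {..<n}"
proof
  show "simplices X adj 0 \<subseteq> vertex_simplex ` {..<n}"
  proof
    fix s assume "s \<in> simplices X adj 0"
    then obtain a where "s = {a}" "a \<in> X" by (auto simp: simplices_def card_1_singleton_iff)
    then show "s \<in> vertex_simplex ` {..<n}" using X_eq by (auto simp: vertex_simplex_def)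
  qed
  show "vertex_simplex ` {..<n} \<subseteq> simplices X adj 0"
    using X_eq by (auto simp: simplices_def vertex_simplex_def)
qed

lemma simplices1_eq: "simplices X adj 1 = edge_simplex ` {..<n}"
proof
  show "simplices X adj 1 \<subseteq> edge_simplex ` {..<n}"
  proof
    fix s assume s: "s \<in> simplices X adj 1"
    then have "card s = 2" by (simp add: simplices_def)
    then obtain a b where ab: "s = {a, b}" "a \<noteq> b" by (auto simp: card_2_iff)
    then obtain i j where ij: "i < n" "j < n" "a = x i" "b = x j"
      using s X_eq by (auto simp: simplices_def)
    have "adj a b" using s ab by (auto simp: simplices_def)
    then have "j = Suc i mod n \<or> i = Suc j mod n" using digital_cycle_adj[OF dc ij(1,2)] ij by simp
    then have "s = edge_simplex i \<or> s = edge_simplex j"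
      using ab ij by (auto simp: edge_simplex_def insert_commute)
    then show "s \<in> edge_simplex ` {..<n}" using ij by auto
  qed
  show "edge_simplex ` {..<n} \<subseteq> simplices X adj 1"
  proof
    fix s assume "s \<in> edge_simplex ` {..<n}"
    then obtain i where i: "i < n" "s = edge_simplex i" by auto
    have "adj (x i) (x (Suc i mod n))" "adj (x (Suc i mod n)) (x i)"
      using digital_cycle_adj[OF dc i(1) Suc_mod_less] digital_cycle_adj[OF dc Suc_mod_less i(1)]
      by simp_all
    then show "s \<in> simplices X adj 1"
      using i x_neq_x_Suc[OF i(1)] x_in_X Suc_mod_less by (auto simp: simplices_def edge_simplex_def)
  qed
qed

lemma simp_bd_edge_vertex:
  assumes i: "i < n" and k: "k < n"
  shows "simp_bd 1 (edge_simplex i) (vertex_simplex k) =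
    edge_sign i * ((if k = Suc i mod n then 1 else 0) - (if k = i then 1 else 0))"
  using simp_bd_edge[OF orient_edge_simplex[OF i] tail_neq_head[OF i], of 1 "x k"]
    edge_sign_cases[of i] x_eq_iff[OF k Suc_mod_less, of i] x_eq_iff[OF k i]
  by (auto simp: vertex_simplex_def edge_boundary_def edge_tail_def edge_head_def)

lemma cycle_complex_simplices:
  "cycle_complex n (simplices X adj) simp_bd vertex_simplex edge_simplex edge_sign"
proof
  show "inj_on vertex_simplex {..<n}"
    using x_eq_iff by (auto simp: inj_on_def vertex_simplex_def)
  show "inj_on edge_simplex {..<n}"
    unfolding inj_on_def edge_simplex_def using cyclic_edge_eq_imp_eq[OF n3 x_inj] by auto
qed (use n3 simplices0_eq simplices1_eq edge_sign_cases simp_bd_edge_vertex in auto)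

lemma no_simplices_if_ge_4:
  assumes n4: "4 \<le> n" and q: "2 \<le> q"
  shows "simplices X adj q = {}"
proof (rule ccontr)
  assume "simplices X adj q \<noteq> {}"
  then obtain s where s: "s \<in> simplices X adj q" by auto
  then have "3 \<le> card s" using q by (simp add: simplices_def)
  then obtain a b c where abc: "a \<in> s" "b \<in> s" "c \<in> s" "a \<noteq> b" "b \<noteq> c" "a \<noteq> c"
    by (rule three_distinct_elems)
  have "a \<in> X" "b \<in> X" "c \<in> X" using abc s by (auto simp: simplices_def)
  then obtain i j k where ijk: "i < n" "j < n" "k < n" "a = x i" "b = x j" "c = x k"
    using X_eq by auto
  have "i \<noteq> j" "j \<noteq> k" "i \<noteq> k" using abc ijk by auto
  moreover have "adj a b" "adj b c" "adj a c" using s abc by (auto simp: simplices_def)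
  ultimately show False
    using no_cyclic_triangle[OF n4 ijk(1-3)] digital_cycle_adj[OF dc] ijk by auto
qed

lemma simplices2_triangle: "n = 3 \<Longrightarrow> simplices X adj 2 = {X}"
proof
  assume n: "n = 3"
  show "simplices X adj 2 \<subseteq> {X}"
  proof
    fix s assume "s \<in> simplices X adj 2"
    then have "s \<subseteq> X" "card s = 3" by (auto simp: simplices_def)
    then show "s \<in> {X}" using card_X n finite_X by (simp add: card_subset_eq)
  qed
  show "{X} \<subseteq> simplices X adj 2"
    using finite_X card_X n adj_triangle by (auto simp: simplices_def)
qed

lemma no_simplices_triangle: "n = 3 \<Longrightarrow> 3 \<le> q \<Longrightarrow> simplices X adj q = {}"
  using card_mono[OF finite_X] card_X by (fastforce simp: simplices_def)

lemma simp_fc_vertex: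
  assumes "f ` X \<subseteq> X" and k: "k < n" and k': "k' < n"
  shows "simp_fc f 0 (vertex_simplex k) (vertex_simplex k') = (if k' = \<phi> f k then 1 else 0)"
  using index_map_x[OF assms(1) k] x_eq_iff[OF k'] 
  by (auto simp: simp_fc_def vertex_simplex_def orient_singleton relsign_singleton)

lemma simp_fc_edge:
  assumes fc: "digital_continuous X adj f" and i: "i < n" and j: "j < n"
  shows "simp_fc f 1 (edge_simplex i) (edge_simplex j) =
    edge_sign i * edge_sign j * of_int (edge_flow n (\<phi> f) i j)"
proof -
  have fX: "f ` X \<subseteq> X" using fc by (simp add: digital_continuous_def)
  have "simp_fc f 1 (edge_simplex i) (edge_simplex j)
      = oriented_image_coeff f (tail i) (head i) (tail j) (head j)"
  proof (cases "{f (tail i), f (head i)} = {tail j, head j}")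
    case True
    then have "f (tail i) \<noteq> f (head i)"
      using tail_neq_head[OF j] by (auto simp: doubleton_eq_iff)
    then show ?thesis
      using True orient_edge_simplex[OF i] orient_edge_simplex[OF j] edge_simplex_eq
        relsign_doubleton[OF tail_neq_head[OF j] True] tail_neq_head[OF j]
      by (simp add: simp_fc_def oriented_image_coeff_def)
  next
    case False
    then show ?thesis
      by (simp add: simp_fc_def oriented_image_coeff_def edge_simplex_eq)
  qed
  also have "\<dots> = edge_sign i * edge_sign j * of_int (edge_flow n (\<phi> f) i j)"
    using oriented_image_coeff_edge[OF n3 x_inj cycle_map_index_map[OF n3 dc fc] _ i j
        edge_sign_cases edge_sign_cases] index_map_x[OF fX] by blast
  finally show ?thesis .
qed

lemma simp_lefschetz_hollow:
  assumes fc: "digital_continuous X adj f" and n4: "4 \<le> n"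
  shows "simp_lefschetz X adj f = 1 - of_int (cycle_degree n (\<phi> f))"
  unfolding simp_lefschetz_def
proof (rule cycle_complex.lefschetz_hollow[OF cycle_complex_simplices])
  show "cycle_map n (\<phi> f)" by (rule cycle_map_index_map[OF n3 dc fc])
qed (use fc n3 simp_fc_vertex simp_fc_edge no_simplices_if_ge_4[OF n4]
    in \<open>auto simp: digital_continuous_def card_X\<close>)

lemma orient_triangle:
  assumes n: "n = 3"
  obtains p q r where "orient X = [p, q, r]" "p \<noteq> q" "q \<noteq> r" "p \<noteq> r" "X = {p, q, r}"
proof -
  have "length (orient X) = 3"
    using orient_distinct_set[OF finite_X] card_X n distinct_card[of "orient X"] by simp
  then obtain p q r where "orient X = [p, q, r]"
    by (cases "orient X"; cases "tl (orient X)"; cases "tl (tl (orient X))") auto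
  then show ?thesis using that orient_distinct_set[OF finite_X] by auto
qed

lemma simp_bd_bd_triangle:
  assumes n: "n = 3" and L: "orient X = [p, q, r]" and pqr: "p \<noteq> q" "q \<noteq> r" "p \<noteq> r"
    and XL: "X = {p, q, r}" and k: "k < n"
  shows "(\<Sum>i<n. simp_bd 2 X (edge_simplex i) * simp_bd 1 (edge_simplex i) (vertex_simplex k)) = 0"
proof -
  have edges: "{q, r} \<in> simplices X adj 1" "{p, r} \<in> simplices X adj 1" "{p, q} \<in> simplices X adj 1"
    using adj_triangle[OF n] XL pqr by (auto simp: simplices_def)
  have bd_bd: "simp_bd 2 X t * simp_bd 1 t {u} = (if t = {q, r} then edge_boundary q r u else 0)
      - (if t = {p, r} then edge_boundary p r u else 0) + (if t = {p, q} then edge_boundary p q u else 0)"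
    if t: "t \<in> simplices X adj 1" for t u
  proof -
    obtain i where i: "i < n" "t = edge_simplex i" using t simplices1_eq by auto
    then have o: "orient t = [tail i, head i]" and ne: "tail i \<noteq> head i"
      and tab: "t = {tail i, head i}"
      using orient_edge_simplex tail_neq_head edge_simplex_eq by auto
    show ?thesis
      unfolding simp_bd_triangle[OF L] simp_bd_edge[OF o ne] o
      using relsign_edge_boundary[OF ne] tab by (auto simp: algebra_simps)
  qed
  have "(\<Sum>i<n. simp_bd 2 X (edge_simplex i) * simp_bd 1 (edge_simplex i) (vertex_simplex k))
      = (\<Sum>t\<in>simplices X adj 1. simp_bd 2 X t * simp_bd 1 t {x k})"
    unfolding simplices1_eq
    by (simp add: sum.reindex[OF cycle_complex.e_inj[OF cycle_complex_simplices]] vertex_simplex_def)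
  also have "\<dots> = (\<Sum>t\<in>simplices X adj 1. (if t = {q, r} then edge_boundary q r (x k) else 0)
      - (if t = {p, r} then edge_boundary p r (x k) else 0)
      + (if t = {p, q} then edge_boundary p q (x k) else 0))"
    using bd_bd by (intro sum.cong) auto
  also have "\<dots> = edge_boundary q r (x k) - edge_boundary p r (x k) + edge_boundary p q (x k)"
    using edges simplices1_eq[THEN arg_cong[where f = finite]]
    by (simp add: sum.distrib sum_subtractf)
  finally show ?thesis by (simp add: edge_boundary_def)
qed

lemma simp_bd_triangle_nonzero:
  assumes L: "orient X = [p, q, r]" and pqr: "p \<noteq> q" "q \<noteq> r" "p \<noteq> r" and XL: "X = {p, q, r}"
  shows "simp_bd 2 X (edge_simplex 0) \<noteq> 0"
proof -
  obtain a b where ab: "edge_simplex 0 = {a, b}" "a \<noteq> b" "a \<in> {p, q, r}" "b \<in> {p, q, r}"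
    using edge_simplex_eq tail_neq_head[OF n_pos] x_in_X n_pos Suc_mod_less XL
    by (auto simp: edge_tail_def edge_head_def)
  then show ?thesis
    unfolding simp_bd_triangle[OF L] ab(1) using pqr relsign_nonzero
    by (auto simp: doubleton_eq_iff)
qed

lemma filled_cycle_complex_triangle:
  assumes n: "n = 3"
  shows "filled_cycle_complex n (simplices X adj) simp_bd vertex_simplex edge_simplex edge_sign X"
proof -
  interpret cycle_complex n "simplices X adj" simp_bd vertex_simplex edge_simplex edge_sign
    by (rule cycle_complex_simplices)
  obtain p q r where pqr: "orient X = [p, q, r]" "p \<noteq> q" "q \<noteq> r" "p \<noteq> r" "X = {p, q, r}"
    using orient_triangle[OF n] .
  show ?thesis
    using simplices2_triangle[OF n] no_simplices_triangle[OF n] simp_bd_bd_triangle[OF n pqr]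
      simp_bd_triangle_nonzero[OF pqr] n_pos
    by unfold_locales auto
qed

lemma simp_lefschetz_cases:
  assumes fc: "digital_continuous X adj f"
  shows "simp_lefschetz X adj f \<in> {0, 1, 2}"
proof (cases "n = 3")
  case True
  interpret filled_cycle_complex n "simplices X adj" simp_bd vertex_simplex edge_simplex edge_sign X
    using filled_cycle_complex_triangle[OF True] .
  have "simp_lefschetz X adj f = 1"
    unfolding simp_lefschetz_def using fc True card_X index_map_x simp_fc_vertex
    by (intro lefschetz_filled[of "\<phi> f"]) (auto simp: digital_continuous_def)
  then show ?thesis by simp
next
  case False
  then have "cycle_degree n (\<phi> f) \<in> {-1, 0, 1}"
    using cycle_degree_cases[OF n3 cycle_map_index_map[OF n3 dc fc]] by simp
  then show ?thesis using simp_lefschetz_hollow[OF fc] n3 False by auto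
qed

end

section \<open>Cubical homology of a digital cycle in Z^m\<close>

definition incr :: "nat \<Rightarrow> int list \<Rightarrow> int list" where
  "incr j a = a[j := a ! j + 1]"

lemma length_incr [simp]: "length (incr j a) = length a"
  by (simp add: incr_def)

lemma nth_incr: "i < length a \<Longrightarrow> incr j a ! i = (if i = j then a ! i + 1 else a ! i)"
  by (auto simp: incr_def nth_list_update)

lemma incr_neq: "j < length a \<Longrightarrow> incr j a \<noteq> a"
  by (metis less_add_one order_less_irrefl nth_incr)

lemma incr_commute: "incr j (incr k a) = incr k (incr j a)"
  by (cases "j = k") (auto simp: incr_def list_update_swap nth_list_update)

lemma sum_list_incr: "j < length a \<Longrightarrow> sum_list (incr j a) = sum_list a + 1"
proof (induction a arbitrary: j)
  case (Cons b a)
  then show ?case by (cases j) (auto simp: incr_def)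
qed simp

lemma incr_incr_neq: "j < length a \<Longrightarrow> k < length a \<Longrightarrow> incr j (incr k a) \<noteq> a"
  using sum_list_incr[of j "incr k a"] sum_list_incr[of k a] by auto

lemma incr_neq_incr: "j < length a \<Longrightarrow> j \<noteq> k \<Longrightarrow> incr j a \<noteq> incr k a"
  by (metis add_cancel_right_right nth_incr one_neq_zero)

lemma c1_adj_incr_cases:
  assumes "c1_adj u w"
  obtains j where "j < length u" "w = incr j u \<or> u = incr j w"
proof -
  obtain k where k: "length u = length w" "k < length u" "\<bar>u ! k - w ! k\<bar> = 1"
    "\<forall>i<length u. i \<noteq> k \<longrightarrow> u ! i = w ! i" using assms by (auto simp: c1_adj_def)
  show ?thesis
  proof (cases "w ! k = u ! k + 1")
    case True
    have "w = incr k u" by (rule nth_equalityI) (use k True in \<open>auto simp: nth_incr\<close>)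
    then show ?thesis using k that by auto
  next
    case False
    then have "u ! k = w ! k + 1" using k by auto
    then have "u = incr k w" by (intro nth_equalityI) (use k in \<open>auto simp: nth_incr\<close>)
    then show ?thesis using k that by auto
  qed
qed

lemma c1_adj_incr: "j < length a \<Longrightarrow> c1_adj a (incr j a)"
  unfolding c1_adj_def by (intro conjI exI[of _ j]) (auto simp: nth_incr)

lemma c1_adj_sym: "c1_adj u w \<Longrightarrow> c1_adj w u"
  unfolding c1_adj_def by (metis abs_minus_commute)

lemma c1_adj_sum_list: "c1_adj u w \<Longrightarrow> sum_list w = sum_list u + 1 \<or> sum_list u = sum_list w + 1"
  by (elim c1_adj_incr_cases) (auto simp: sum_list_incr c1_adj_def)

lemma c1_adj_common_neighbour:
  assumes j: "j < length a" and k: "k < length a" and jk: "j \<noteq> k"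
    and c1: "c1_adj (incr j a) w" and c2: "c1_adj (incr k a) w" and wa: "w \<noteq> a"
  shows "w = incr j (incr k a)"
proof -
  obtain l1 where l1: "length w = length a" "l1 < length a"
      "\<forall>i<length a. i \<noteq> l1 \<longrightarrow> incr j a ! i = w ! i"
    using c1 by (auto simp: c1_adj_def)
  obtain l2 where l2: "l2 < length a" "\<forall>i<length a. i \<noteq> l2 \<longrightarrow> incr k a ! i = w ! i"
    using c2 by (auto simp: c1_adj_def)
  have "l1 = j \<or> l2 = j" "l1 = k \<or> l2 = k"
    using l1 l2 j k jk by (metis nth_incr add_cancel_right_right one_neq_zero)+
  then consider "l1 = j" "l2 = k" | "l1 = k" "l2 = j" using jk by auto
  then show ?thesis
  proof cases
    case 1
    have "w = a"
      by (rule nth_equalityI) (use l1 l2 1 jk in \<open>auto simp: nth_incr split: if_splits\<close>)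
    then show ?thesis using wa by simp
  next
    case 2
    show ?thesis
      by (rule nth_equalityI) (use l1 l2 2 jk in \<open>auto simp: nth_incr\<close>)
  qed
qed

lemma cube_pts_empty: "cube_pts a {} = {a}"
  by (auto simp: cube_pts_def intro: nth_equalityI)

lemma cube_pts_mono: "J \<subseteq> K \<Longrightarrow> cube_pts a J \<subseteq> cube_pts a K"
  by (auto simp: cube_pts_def)

lemma cube_ptsI:
  assumes "length p = length a"
    and "\<And>i. i < length a \<Longrightarrow> if i \<in> J then p ! i = a ! i \<or> p ! i = a ! i + 1 else p ! i = a ! i"
  shows "p \<in> cube_pts a J"
  using assms by (simp add: cube_pts_def)

lemma cube_ptsD:
  assumes "p \<in> cube_pts a J"
  shows "length p = length a"
    and "i < length a \<Longrightarrow> if i \<in> J then p ! i = a ! i \<or> p ! i = a ! i + 1 else p ! i = a ! i"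
  using assms by (simp_all add: cube_pts_def)

lemma cube_pts_insert_subset:
  assumes j: "j < length a" and jJ: "j \<notin> J"
  shows "cube_pts a (insert j J) \<subseteq> cube_pts a J \<union> incr j ` cube_pts a J"
proof
  fix p assume p: "p \<in> cube_pts a (insert j J)"
  note coord = cube_ptsD(2)[OF p]
  show "p \<in> cube_pts a J \<union> incr j ` cube_pts a J"
  proof (cases "p ! j = a ! j")
    case True
    have "p \<in> cube_pts a J"
    proof (rule cube_ptsI)
      fix i assume "i < length a"
      then show "if i \<in> J then p ! i = a ! i \<or> p ! i = a ! i + 1 else p ! i = a ! i"
        using coord[of i] True jJ by (cases "i = j") auto
    qed (rule cube_ptsD(1)[OF p])
    then show ?thesis by blast
  next
    case False
    then have pj: "p ! j = a ! j + 1" using coord[OF j] by auto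
    define q where "q = p[j := a ! j]"
    have "q \<in> cube_pts a J"
    proof (rule cube_ptsI)
      fix i assume "i < length a"
      then show "if i \<in> J then q ! i = a ! i \<or> q ! i = a ! i + 1 else q ! i = a ! i"
        using coord[of i] jJ cube_ptsD(1)[OF p] by (cases "i = j") (auto simp: q_def)
    qed (use cube_ptsD(1)[OF p] in \<open>simp add: q_def\<close>)
    moreover have "p = incr j q"
      using pj cube_ptsD(1)[OF p] j by (simp add: incr_def q_def flip: pj)
    ultimately show ?thesis by blast
  qed
qed

lemma cube_pts_insert:
  assumes j: "j < length a" and jJ: "j \<notin> J"
  shows "cube_pts a (insert j J) = cube_pts a J \<union> incr j ` cube_pts a J"
proof
  show "cube_pts a J \<union> incr j ` cube_pts a J \<subseteq> cube_pts a (insert j J)"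
  proof
    fix p assume "p \<in> cube_pts a J \<union> incr j ` cube_pts a J"
    then consider "p \<in> cube_pts a J" | q where "q \<in> cube_pts a J" "p = incr j q" by blast
    then show "p \<in> cube_pts a (insert j J)"
    proof cases
      case 1
      then show ?thesis using cube_pts_mono[of J "insert j J" a] by blast
    next
      case 2
      have "q ! j = a ! j" using cube_ptsD(2)[OF 2(1) j] jJ by simp
      show ?thesis
      proof (rule cube_ptsI)
        fix i assume "i < length a"
        then show "if i \<in> insert j J then p ! i = a ! i \<or> p ! i = a ! i + 1 else p ! i = a ! i"
          using 2 cube_ptsD[OF 2(1)] \<open>q ! j = a ! j\<close> by (cases "i = j") (auto simp: nth_incr)
      qed (use 2 cube_ptsD(1)[OF 2(1)] in simp)
    qed
  qed
qed (rule cube_pts_insert_subset[OF assms])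

lemma cube_pts_singleton: "j < length a \<Longrightarrow> cube_pts a {j} = {a, incr j a}"
  using cube_pts_insert[of j a "{}"] by (auto simp: cube_pts_empty)

lemma cube_pts_doubleton:
  "j < length a \<Longrightarrow> k < length a \<Longrightarrow> j \<noteq> k \<Longrightarrow>
    cube_pts a {j, k} = {a, incr j a, incr k a, incr j (incr k a)}"
  using cube_pts_insert[of j a "{k}"] by (auto simp: cube_pts_singleton)

lemma card_cube_pts_doubleton:
  assumes j: "j < length a" and k: "k < length a" and jk: "j \<noteq> k"
  shows "card (cube_pts a {j, k}) = 4"
proof -
  have "a \<noteq> incr j a" "a \<noteq> incr k a" "a \<noteq> incr j (incr k a)"
    using incr_neq[OF j] incr_neq[OF k] incr_incr_neq[OF j k] by metis+
  moreover have "incr j a \<noteq> incr k a" using incr_neq_incr[OF j jk] .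
  moreover have "incr j a \<noteq> incr j (incr k a)"
  proof
    assume "incr j a = incr j (incr k a)"
    then have "incr j a ! k = incr j (incr k a) ! k" by simp
    then show False using k jk by (simp add: nth_incr)
  qed
  moreover have "incr k a \<noteq> incr j (incr k a)" using incr_neq[of j "incr k a"] j by simp
  ultimately show ?thesis using cube_pts_doubleton[OF assms] by simp
qed

lemma cube_pts_self: "a \<in> cube_pts a J"
  by (simp add: cube_pts_def)

lemma cube_pts_min: "p \<in> cube_pts a J \<Longrightarrow> i < length a \<Longrightarrow> a ! i \<le> p ! i"
  by (auto simp: cube_pts_def split: if_splits)

lemma incr_in_cube_pts_iff: "j < length a \<Longrightarrow> incr j a \<in> cube_pts a J \<longleftrightarrow> j \<in> J"
  by (auto simp: cube_pts_def nth_incr split: if_splits)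

lemma cube_pts_eq_imp_eq:
  assumes l: "length a = length b" and J: "J \<subseteq> {..<length a}" and K: "K \<subseteq> {..<length b}"
    and eq: "cube_pts a J = cube_pts b K"
  shows "a = b \<and> J = K"
proof -
  have "a \<in> cube_pts b K" "b \<in> cube_pts a J" using eq cube_pts_self by metis+
  then have ab: "a = b"
    using cube_pts_min l by (intro nth_equalityI) (auto intro: order.antisym)
  have "J = K"
    using J K eq incr_in_cube_pts_iff[of _ a] l unfolding ab by blast
  then show ?thesis using ab by simp
qed

lemma cube_vertex_empty: "cube_vertex a J {} = a"
  by (simp add: cube_vertex_def map_nth)

lemma cube_vertex_singleton: "j < length a \<Longrightarrow> cube_vertex a {j} {0} = incr j a"
  by (intro nth_equalityI) (auto simp: cube_vertex_def nth_incr)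

lemma cube_bd_edge:
  "cube_bd 1 (a, {j}) (b, {}) = (if b = incr j a then 1 else 0) - (if b = a then 1 else 0)"
  by (simp add: cube_bd_def incr_def)

lemma cube_bd_square:
  assumes "j < k"
  shows "cube_bd 2 (a, {j, k}) c =
    - ((if c = (a, {k}) then 1 else 0) - (if c = (incr j a, {k}) then 1 else 0))
    + ((if c = (a, {j}) then 1 else 0) - (if c = (incr k a, {j}) then 1 else 0))"
proof -
  have "sorted_list_of_set {j, k} = [j, k]" "card {j, k} = 2" "{j, k} - {j} = {k}" "{j, k} - {k} = {j}"
    using assms by auto
  then show ?thesis
    unfolding cube_bd_def using assms by (simp add: eval_nat_numeral incr_def Let_def)
qed

lemma cube_fc_vertex: "cube_fc g 0 (a, {}) (b, {}) = (if g a = b then 1 else 0)"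
proof -
  have form: "cube_form g (a, {}) (b, {}) p R \<longleftrightarrow> p = id \<and> R = {} \<and> g a = b" for p R
    by (auto simp: cube_form_def cube_vertex_empty)
  then have "(SOME e. \<exists>p R. cube_form g (a, {}) (b, {}) p R \<and> e = of_int (sign p) * (-1) ^ card R)
      = (1::rat)" if "g a = b"
    using that by (intro some_equality) auto
  then show ?thesis using form by (simp add: cube_fc_def cube_pts_empty)
qed

lemma cube_form_edge:
  assumes ja: "ja < length a" and jb: "jb < length b"
  shows "cube_form g (a, {ja}) (b, {jb}) p R \<longleftrightarrow>
    p = id \<and> (R = {} \<and> g a = b \<and> g (incr ja a) = incr jb b \<or> R = {0} \<and> g a = incr jb b \<and> g (incr ja a) = b)"
proof -
  have pid: "p permutes {..<Suc 0} \<longleftrightarrow> p = id" by (simp add: lessThan_Suc)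
  have sub0: "S \<subseteq> {..<Suc 0} \<longleftrightarrow> S = {} \<or> S = {0}" for S :: "nat set"
    by (auto simp: lessThan_Suc)
  have allS: "(\<forall>S\<subseteq>{..<Suc 0}. P S) \<longleftrightarrow> P {} \<and> P {0}" for P by (auto simp: sub0)
  have allS0: "(\<forall>S\<subseteq>{0::nat}. P S) \<longleftrightarrow> P {} \<and> P {0}" for P by (auto simp: subset_singleton_iff)
  have f1: "{i::nat. i = 0 \<and> i \<in> {}} = {}" "{i::nat. i = 0 \<and> i \<in> {0}} = {0}" by auto
  have f2: "{i::nat. i = 0 \<and> i \<notin> {}} = {0}" "{i::nat. i = 0 \<and> i \<notin> {0}} = {}"
    "{i::nat. i = 0 \<and> (i = 0) = (0 < i)} = {}" by auto
  have e1: "{i. i < Suc 0 \<and> (id i \<in> {}) \<noteq> (i \<in> {})} = {}" by auto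
  have e2: "{i. i < Suc 0 \<and> (id i \<in> {0}) \<noteq> (i \<in> {})} = {0}" by auto
  have e3: "{i. i < Suc 0 \<and> (id i \<in> {}) \<noteq> (i \<in> {0})} = {0}" by auto
  have e4: "{i. i < Suc 0 \<and> (id i \<in> {0}) \<noteq> (i \<in> {0})} = {}" by auto
  show ?thesis
  proof (cases "p = id")
    case False
    then show ?thesis by (simp add: cube_form_def pid)
  next
    case True
    show ?thesis
    proof (cases "R = {}")
      case R: True
      show ?thesis unfolding cube_form_def using True R
        by (simp add: pid allS e1 e2 cube_vertex_empty cube_vertex_singleton[OF ja] cube_vertex_singleton[OF jb] lessThan_Suc allS0 f1 f2)
    next
      case R: False
      show ?thesis
      proof (cases "R = {0}")
        case R0: True
        show ?thesis unfolding cube_form_def using True R0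
          by (simp add: pid allS e3 e4 cube_vertex_empty cube_vertex_singleton[OF ja] cube_vertex_singleton[OF jb] lessThan_Suc allS0 f1 f2)
      next
        case R0: False
        then have "\<not> R \<subseteq> {..<Suc 0}" using R by (auto simp: sub0)
        then show ?thesis using R R0 by (auto simp: cube_form_def)
      qed
    qed
  qed
qed

lemma cube_fc_edge:
  assumes ja: "ja < length a" and jb: "jb < length b"
  shows "cube_fc g 1 (a, {ja}) (b, {jb}) = oriented_image_coeff g a (incr ja a) b (incr jb b)"
proof (cases "{g a, g (incr ja a)} = {b, incr jb b}")
  case True
  have bne: "b \<noteq> incr jb b" using incr_neq[OF jb] by simp
  let ?R = "if g a = b then {} else {0::nat}"
  have form: "cube_form g (a, {ja}) (b, {jb}) id ?R"
    using True bne by (auto simp: cube_form_edge[OF ja jb] doubleton_eq_iff)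
  have "(SOME e. \<exists>p R. cube_form g (a, {ja}) (b, {jb}) p R \<and> e = of_int (sign p) * (-1) ^ card R)
      = (if g a = b then 1 else -1 :: rat)"
  proof (rule some_equality)
    show "\<exists>p R. cube_form g (a, {ja}) (b, {jb}) p R \<and>
        (if g a = b then 1 else -1 :: rat) = of_int (sign p) * (-1) ^ card R"
      using form by (intro exI[of _ id] exI[of _ ?R]) (simp add: sign_id)
  qed (use True bne in \<open>auto simp: cube_form_edge[OF ja jb] sign_id doubleton_eq_iff\<close>)
  then show ?thesis
    using True form unfolding cube_fc_def oriented_image_coeff_def
    by (auto simp: cube_pts_singleton ja jb)
qed (simp add: cube_fc_def oriented_image_coeff_def cube_pts_singleton ja jb)

locale cubical_cycle = digital_n_cycle X adj n x
  for X :: "int list set" and adj n x +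
  fixes m :: nat
  assumes length_X: "\<forall>p\<in>X. length p = m"
    and adj_c1: "\<forall>u\<in>X. \<forall>w\<in>X. adj u w \<longleftrightarrow> c1_adj u w"
begin

lemma length_x: "k < n \<Longrightarrow> length (x k) = m"
  using length_X x_in_X by auto

lemma c1_adj_x_iff: "i < n \<Longrightarrow> j < n \<Longrightarrow> c1_adj (x i) (x j) \<longleftrightarrow> (j = Suc i mod n \<or> i = Suc j mod n)"
  using digital_cycle_adj[OF dc] adj_c1 x_in_X by auto

lemma c1_adj_x_Suc: "i < n \<Longrightarrow> c1_adj (x i) (x (Suc i mod n))"
  using c1_adj_x_iff[OF _ Suc_mod_less] by simp

lemma edge_cube_exists:
  assumes i: "i < n"
  shows "\<exists>c. c \<in> cube_cells m X 1 \<and> cube_pts (fst c) (snd c) = {x i, x (Suc i mod n)}"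
proof -
  obtain j where j: "j < length (x i)" "x (Suc i mod n) = incr j (x i) \<or> x i = incr j (x (Suc i mod n))"
    using c1_adj_x_Suc[OF i] by (rule c1_adj_incr_cases)
  then consider "x (Suc i mod n) = incr j (x i)" | "x i = incr j (x (Suc i mod n))" by blast
  then show ?thesis
  proof cases
    case 1
    then have "cube_pts (x i) {j} = {x i, x (Suc i mod n)}" using cube_pts_singleton[OF j(1)] by simp
    then show ?thesis
      using j length_x[OF i] x_in_X[OF i] x_in_X[OF Suc_mod_less]
      by (intro exI[of _ "(x i, {j})"]) (simp add: cube_cells_def)
  next
    case 2
    have "j < length (x (Suc i mod n))" using j length_x[OF i] length_x[OF Suc_mod_less] by simp
    then have "cube_pts (x (Suc i mod n)) {j} = {x i, x (Suc i mod n)}"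
      using cube_pts_singleton 2 by auto
    then show ?thesis
      using j length_x[OF i] length_x[OF Suc_mod_less] x_in_X[OF i] x_in_X[OF Suc_mod_less]
      by (intro exI[of _ "(x (Suc i mod n), {j})"]) (simp add: cube_cells_def)
  qed
qed

definition edge_cube :: "nat \<Rightarrow> int list \<times> nat set" where
  "edge_cube i = (SOME c. c \<in> cube_cells m X 1 \<and> cube_pts (fst c) (snd c) = {x i, x (Suc i mod n)})"

lemma edge_cube_spec:
  "i < n \<Longrightarrow> edge_cube i \<in> cube_cells m X 1 \<and> cube_pts (fst (edge_cube i)) (snd (edge_cube i)) = {x i, x (Suc i mod n)}"
  unfolding edge_cube_def by (rule someI_ex) (rule edge_cube_exists)

lemma cube_cells1_cases:
  "c \<in> cube_cells m X 1 \<Longrightarrow> \<exists>j<m. snd c = {j} \<and> length (fst c) = m"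
  by (auto simp: cube_cells_def card_1_singleton_iff)

definition edge_dir :: "nat \<Rightarrow> nat" where
  "edge_dir i = (SOME j. j < m \<and> snd (edge_cube i) = {j})"

definition edge_sign :: "nat \<Rightarrow> rat" where
  "edge_sign i = (if fst (edge_cube i) = x i then 1 else -1)"

lemma edge_sign_cases: "edge_sign i = 1 \<or> edge_sign i = -1"
  by (simp add: edge_sign_def)

lemma edge_dir: "i < n \<Longrightarrow> edge_dir i < m \<and> snd (edge_cube i) = {edge_dir i}"
  unfolding edge_dir_def by (rule someI_ex) (use cube_cells1_cases edge_cube_spec in blast)

lemma edge_cube_eq: "i < n \<Longrightarrow> edge_cube i = (fst (edge_cube i), {edge_dir i})"
  using edge_dir by (metis prod.collapse)

lemma length_edge_cube: "i < n \<Longrightarrow> length (fst (edge_cube i)) = m"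
  using cube_cells1_cases edge_cube_spec by blast

lemma edge_dir_less_length: "i < n \<Longrightarrow> edge_dir i < length (fst (edge_cube i))"
  using edge_dir length_edge_cube by simp

lemma edge_cube_ends:
  assumes i: "i < n"
  shows "fst (edge_cube i) = edge_tail n x (edge_sign i) i"
    "incr (edge_dir i) (fst (edge_cube i)) = edge_head n x (edge_sign i) i"
proof -
  have pts: "{fst (edge_cube i), incr (edge_dir i) (fst (edge_cube i))} = {x i, x (Suc i mod n)}"
    using edge_cube_spec[OF i] edge_dir[OF i] cube_pts_singleton[OF edge_dir_less_length[OF i]] by simp
  moreover have "fst (edge_cube i) \<noteq> incr (edge_dir i) (fst (edge_cube i))"
    using incr_neq[OF edge_dir_less_length[OF i]] by simp
  ultimately show "fst (edge_cube i) = edge_tail n x (edge_sign i) i"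
    "incr (edge_dir i) (fst (edge_cube i)) = edge_head n x (edge_sign i) i"
    using x_neq_x_Suc[OF i]
    by (auto simp: edge_sign_def edge_tail_def edge_head_def doubleton_eq_iff)
qed

definition vertex_cube :: "nat \<Rightarrow> int list \<times> nat set" where
  "vertex_cube k = (x k, {})"

lemma cube_cells0_eq: "cube_cells m X 0 = vertex_cube ` {..<n}"
proof
  show "cube_cells m X 0 \<subseteq> vertex_cube ` {..<n}"
  proof
    fix c assume c: "c \<in> cube_cells m X 0"
    then obtain a J where aJ: "c = (a, J)" "J \<subseteq> {..<m}" "card J = 0" "cube_pts a J \<subseteq> X"
      by (auto simp: cube_cells_def)
    then have "J = {}" using finite_subset[OF aJ(2)] by simp
    then obtain k where "k < n" "a = x k" using aJ cube_pts_empty X_eq by auto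
    then show "c \<in> vertex_cube ` {..<n}" using aJ \<open>J = {}\<close> by (auto simp: vertex_cube_def)
  qed
  show "vertex_cube ` {..<n} \<subseteq> cube_cells m X 0"
    using length_x x_in_X by (auto simp: vertex_cube_def cube_cells_def cube_pts_empty)
qed

lemma cube_cells1_eq: "cube_cells m X 1 = edge_cube ` {..<n}"
proof
  show "cube_cells m X 1 \<subseteq> edge_cube ` {..<n}"
  proof
    fix c assume c: "c \<in> cube_cells m X 1"
    then obtain j where j: "j < m" "snd c = {j}" "length (fst c) = m" using cube_cells1_cases by blast
    have pts: "cube_pts (fst c) (snd c) = {fst c, incr j (fst c)}"
      using cube_pts_singleton[of j "fst c"] j by simp
    moreover have "cube_pts (fst c) (snd c) \<subseteq> X"
      using c by (auto simp: cube_cells_def)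
    ultimately obtain p q where pq: "p < n" "q < n" "fst c = x p" "incr j (fst c) = x q"
      using X_eq by auto
    have "c1_adj (x p) (x q)" using pq c1_adj_incr[of j "fst c"] j by simp
    then have "q = Suc p mod n \<or> p = Suc q mod n" using c1_adj_x_iff pq by simp
    then obtain i where i: "i < n" "{x p, x q} = {x i, x (Suc i mod n)}"
      using pq by (auto simp: insert_commute)
    have "snd (edge_cube i) \<subseteq> {..<length (fst (edge_cube i))}" "length (fst (edge_cube i)) = m"
      using edge_cube_spec[OF i(1)] by (auto simp: cube_cells_def)
    then have "fst c = fst (edge_cube i) \<and> snd c = snd (edge_cube i)"
      using edge_cube_spec[OF i(1)] pts pq i j
      by (intro cube_pts_eq_imp_eq) auto
    then show "c \<in> edge_cube ` {..<n}" using i by (auto simp: prod_eq_iff)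
  qed
  show "edge_cube ` {..<n} \<subseteq> cube_cells m X 1"
    using edge_cube_spec by auto
qed

lemma cube_bd_edge_vertex:
  assumes i: "i < n" and k: "k < n"
  shows "cube_bd 1 (edge_cube i) (vertex_cube k) =
    edge_sign i * ((if k = Suc i mod n then 1 else 0) - (if k = i then 1 else 0))"
proof -
  define a where "a = fst (edge_cube i)"
  have "edge_cube i = (a, {edge_dir i})" using edge_cube_eq[OF i] by (simp add: a_def)
  then have "cube_bd 1 (edge_cube i) (vertex_cube k) =
      (if x k = incr (edge_dir i) a then 1 else 0) - (if x k = a then 1 else 0)"
    by (simp only: vertex_cube_def cube_bd_edge)
  then show ?thesis
    using edge_cube_ends[OF i, folded a_def] edge_sign_cases[of i]
      x_eq_iff[OF k Suc_mod_less, of i] x_eq_iff[OF k i]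
    by (auto simp: edge_tail_def edge_head_def)
qed

lemma cycle_complex_cubes: "cycle_complex n (cube_cells m X) cube_bd vertex_cube edge_cube edge_sign"
proof
  show "inj_on vertex_cube {..<n}"
    using x_eq_iff by (auto simp: inj_on_def vertex_cube_def)
  show "inj_on edge_cube {..<n}"
  proof (rule inj_onI)
    fix i j assume "i \<in> {..<n}" "j \<in> {..<n}" "edge_cube i = edge_cube j"
    then show "i = j"
      using edge_cube_spec cyclic_edge_eq_imp_eq[OF n3 x_inj] by (metis lessThan_iff)
  qed
qed (use n3 cube_cells0_eq cube_cells1_eq edge_sign_cases cube_bd_edge_vertex in auto)

lemma cube_fc_vertex_cube:
  assumes "g ` X \<subseteq> X" and k: "k < n" and k': "k' < n"
  shows "cube_fc g 0 (vertex_cube k) (vertex_cube k') = (if k' = \<phi> g k then 1 else 0)"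
  using index_map_x[OF assms(1) k] x_eq_iff[OF _ k']
  by (auto simp: vertex_cube_def cube_fc_vertex)

lemma cube_fc_edge_cube:
  assumes gc: "digital_continuous X adj g" and i: "i < n" and j: "j < n"
  shows "cube_fc g 1 (edge_cube i) (edge_cube j) =
    edge_sign i * edge_sign j * of_int (edge_flow n (\<phi> g) i j)"
proof -
  have gX: "g ` X \<subseteq> X" using gc by (simp add: digital_continuous_def)
  have "cube_fc g 1 (edge_cube i) (edge_cube j) = oriented_image_coeff g
      (edge_tail n x (edge_sign i) i) (edge_head n x (edge_sign i) i)
      (edge_tail n x (edge_sign j) j) (edge_head n x (edge_sign j) j)"
    using cube_fc_edge[OF edge_dir_less_length[OF i] edge_dir_less_length[OF j], of g]
      edge_cube_eq[OF i] edge_cube_eq[OF j] edge_cube_ends[OF i] edge_cube_ends[OF j] by simp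
  also have "\<dots> = edge_sign i * edge_sign j * of_int (edge_flow n (\<phi> g) i j)"
    using oriented_image_coeff_edge[OF n3 x_inj cycle_map_index_map[OF n3 dc gc] _ i j
        edge_sign_cases edge_sign_cases] index_map_x[OF gX] by blast
  finally show ?thesis .
qed


text \<open>Each step along the cycle changes the coordinate sum by 1, so going around the cycle
  takes an even number of steps.\<close>
lemma even_n: "even n"
proof -
  have ev: "even (sum_list (x k) - sum_list (x 0) + int k)" if "k < n" for k
    using that
  proof (induction k)
    case (Suc k)
    have "c1_adj (x k) (x (Suc k))" using c1_adj_x_Suc[of k] Suc.prems by simp
    then show ?case using Suc c1_adj_sum_list by fastforce
  qed simp
  have last: "n - 1 < n" using n_pos by simp
  have "c1_adj (x (n - 1)) (x 0)" using c1_adj_x_Suc[OF last] n_pos by simp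
  then have "odd (int (n - 1))" using ev[OF last] c1_adj_sum_list by fastforce
  then show ?thesis using n_pos by (cases n) auto
qed

lemma x_index: "p \<in> X \<Longrightarrow> \<exists>i<n. p = x i"
  using X_eq by auto

lemma square_in_X_imp_4:
  assumes a: "length a = m" and j: "j < m" and k: "k < m" and jk: "j \<noteq> k"
    and sub: "cube_pts a {j, k} \<subseteq> X"
  shows "n = 4"
proof -
  have jl: "j < length a" and kl: "k < length a" using a j k by auto
  have pts: "cube_pts a {j, k} = {a, incr j a, incr k a, incr j (incr k a)}"
    using cube_pts_doubleton[OF jl kl jk] .
  obtain i0 i1 i2 i3 where i: "i0 < n" "a = x i0" "i1 < n" "incr j a = x i1"
      "i2 < n" "incr j (incr k a) = x i2" "i3 < n" "incr k a = x i3"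
    using x_index sub pts by (metis insertCI subsetD)
  have "c1_adj (x i0) (x i1)" "c1_adj (x i1) (x i2)" "c1_adj (x i2) (x i3)" "c1_adj (x i3) (x i0)"
    using c1_adj_incr[OF jl] c1_adj_incr[of k "incr j a"] c1_adj_sym[OF c1_adj_incr[of j "incr k a"]]
      c1_adj_sym[OF c1_adj_incr[OF kl]] kl jl i incr_commute[of j k] by auto
  moreover have "i0 \<noteq> i2" "i1 \<noteq> i3"
    using incr_incr_neq[OF jl kl] incr_neq_incr[OF jl jk] i by auto
  ultimately show "n = 4"
    using cyclic_square_length[OF n3 i(1,3,5,7)] c1_adj_x_iff i by blast
qed

lemma no_cube_cells_if_not_4:
  assumes n4: "n \<noteq> 4" and q: "2 \<le> q"
  shows "cube_cells m X q = {}"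
proof (rule ccontr)
  assume "cube_cells m X q \<noteq> {}"
  then obtain a J where a: "length a = m" and J: "J \<subseteq> {..<m}" "card J = q"
    and sub: "cube_pts a J \<subseteq> X"
    by (auto simp: cube_cells_def)
  obtain j k where jk: "j \<in> J" "k \<in> J" "j \<noteq> k"
    using J q by (metis two_distinct_elems)
  then have "cube_pts a {j, k} \<subseteq> X" using cube_pts_mono[of "{j, k}" J a] sub by auto
  then show False using square_in_X_imp_4[OF a _ _ jk(3)] jk J n4 by auto
qed

lemma m_pos: "0 < m"
  using c1_adj_x_Suc[OF n_pos] length_x[OF n_pos] by (auto elim: c1_adj_incr_cases)

lemma cube_lefschetz_hollow:
  assumes gc: "digital_continuous X adj g" and n4: "n \<noteq> 4"
  shows "cube_lefschetz m X g = 1 - of_int (cycle_degree n (\<phi> g))"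
  unfolding cube_lefschetz_def
proof (rule cycle_complex.lefschetz_hollow[OF cycle_complex_cubes])
  show "cycle_map n (\<phi> g)" by (rule cycle_map_index_map[OF n3 dc gc])
qed (use gc m_pos cube_fc_vertex_cube cube_fc_edge_cube no_cube_cells_if_not_4[OF n4]
    in \<open>auto simp: digital_continuous_def\<close>)

lemma incr_of_min_neighbour:
  assumes a0: "a0 < n" "\<And>i. i < n \<Longrightarrow> sum_list (x a0) \<le> sum_list (x i)"
    and i: "i < n" and c: "c1_adj (x a0) (x i)"
  obtains j where "j < length (x a0)" "x i = incr j (x a0)"
proof -
  obtain j where j: "j < length (x a0)" "x i = incr j (x a0) \<or> x a0 = incr j (x i)"
    using c by (rule c1_adj_incr_cases)
  have "x a0 \<noteq> incr j (x i)"
  proof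
    assume e: "x a0 = incr j (x i)"
    have "j < length (x i)" using j length_x i a0 by simp
    then show False using sum_list_incr[of j "x i"] e a0(2)[OF i] by simp
  qed
  then show ?thesis using j that by auto
qed

text \<open>For n = 4 the vertex of least coordinate sum has two neighbours of the form incr j a and
  incr k a, and the opposite vertex, adjacent to both, must be incr j (incr k a).\<close>
lemma square_exists:
  assumes n4: "n = 4"
  obtains a j k where "length a = m" "j < k" "k < m" "cube_pts a {j, k} = X"
proof -
  let ?S = "(\<lambda>i. sum_list (x i)) ` {..<n}"
  have "Min ?S \<in> ?S" using n_pos by (intro Min_in) auto
  then obtain a0 where "a0 < n" "sum_list (x a0) = Min ?S" by auto
  then have a0: "a0 < n" "\<And>i. i < n \<Longrightarrow> sum_list (x a0) \<le> sum_list (x i)" by simp_all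
  define i1 where "i1 = Suc a0 mod n"
  define i2 where "i2 = Suc i1 mod n"
  define i3 where "i3 = Suc i2 mod n"
  have "a0 = 0 \<or> a0 = 1 \<or> a0 = 2 \<or> a0 = 3" using a0 n4 by linarith
  then have idx: "i1 < n" "i2 < n" "i3 < n" "Suc i3 mod n = a0" "a0 \<noteq> i2" "i1 \<noteq> i3"
    "{..<n} = {a0, i1, i2, i3}"
    unfolding i1_def i2_def i3_def n4 by (elim disjE; auto)+
  obtain j where j: "j < length (x a0)" "x i1 = incr j (x a0)"
    using incr_of_min_neighbour[OF a0 idx(1)] c1_adj_x_Suc[OF a0(1)] unfolding i1_def by blast
  obtain k where k: "k < length (x a0)" "x i3 = incr k (x a0)"
    using incr_of_min_neighbour[OF a0 idx(3)] c1_adj_sym[OF c1_adj_x_Suc[OF idx(3)]] idx(4)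
    by auto
  have jk: "j \<noteq> k"
  proof
    assume "j = k"
    then have "x i1 = x i3" using j k by simp
    then show False using x_eq_iff[OF idx(1,3)] idx(6) by simp
  qed
  have "x i2 = incr j (incr k (x a0))"
    using c1_adj_common_neighbour[OF j(1) k(1) jk] c1_adj_x_Suc[OF idx(1)]
      c1_adj_sym[OF c1_adj_x_Suc[OF idx(2)]] j k x_eq_iff idx a0(1)
    unfolding i2_def i3_def by auto
  then have pts: "cube_pts (x a0) {j, k} = X"
    using cube_pts_doubleton[OF j(1) k(1) jk] X_eq idx(7) j k by auto
  show ?thesis
  proof (cases "j < k")
    case True
    then show ?thesis using that pts length_x[OF a0(1)] k by auto
  next
    case False
    then show ?thesis
      using that[of "x a0" k j] pts length_x[OF a0(1)] j jk by (auto simp: insert_commute)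
  qed
qed


lemma square_eq_X:
  assumes n4: "n = 4" and b: "length b = m" and j: "j < m" and k: "k < m" and jk: "j \<noteq> k"
    and sub: "cube_pts b {j, k} \<subseteq> X"
  shows "cube_pts b {j, k} = X"
  using card_cube_pts_doubleton[of j b k] sub card_X n4 finite_X b j k jk
  by (simp add: card_subset_eq)

lemma cube_cells2_square:
  assumes n4: "n = 4" and a: "length a = m" and jk: "j < k" "k < m" and pts: "cube_pts a {j, k} = X"
  shows "cube_cells m X 2 = {(a, {j, k})}"
proof
  show "cube_cells m X 2 \<subseteq> {(a, {j, k})}"
  proof
    fix c assume c: "c \<in> cube_cells m X 2"
    obtain b K where bK: "c = (b, K)" "length b = m" "K \<subseteq> {..<m}" "card K = 2" "cube_pts b K \<subseteq> X"
      using c by (cases c) (auto simp: cube_cells_def)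
    then obtain j' k' where K: "K = {j', k'}" "j' \<noteq> k'" by (auto simp: card_2_iff)
    then have "cube_pts b K = cube_pts a {j, k}"
      using square_eq_X[OF n4 bK(2)] bK pts by auto
    then have "b = a \<and> K = {j, k}"
      using cube_pts_eq_imp_eq[of b a K "{j, k}"] a jk bK by auto
    then show "c \<in> {(a, {j, k})}" using bK by simp
  qed
  show "{(a, {j, k})} \<subseteq> cube_cells m X 2"
    using a jk pts by (auto simp: cube_cells_def)
qed

lemma no_cube_cells_square:
  assumes n4: "n = 4" and q: "3 \<le> q"
  shows "cube_cells m X q = {}"
proof (rule ccontr)
  assume "cube_cells m X q \<noteq> {}"
  then obtain b K where b: "length b = m" and K: "K \<subseteq> {..<m}" "card K = q"
    and sub: "cube_pts b K \<subseteq> X"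
    by (auto simp: cube_cells_def)
  obtain j' k' l' where jkl: "j' \<in> K" "k' \<in> K" "l' \<in> K" "j' \<noteq> k'" "k' \<noteq> l'" "j' \<noteq> l'"
    using K q by (metis three_distinct_elems)
  have "cube_pts b {j', k'} \<subseteq> X"
    using jkl sub cube_pts_mono[of "{j', k'}" K b] by auto
  then have "cube_pts b {j', k'} = X"
    using square_eq_X[OF n4 b] jkl K by blast
  moreover have "incr l' b \<in> cube_pts b K"
    using incr_in_cube_pts_iff[of l' b K] jkl K b by auto
  ultimately show False
    using incr_in_cube_pts_iff[of l' b "{j', k'}"] jkl K b sub by auto
qed

lemma square_faces:
  assumes a: "length a = m" and jk: "j < k" "k < m" and pts: "cube_pts a {j, k} = X"
  shows "(a, {k}) \<in> cube_cells m X 1" "(incr j a, {k}) \<in> cube_cells m X 1"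
    "(a, {j}) \<in> cube_cells m X 1" "(incr k a, {j}) \<in> cube_cells m X 1"
  using pts cube_pts_doubleton[of j a k] cube_pts_singleton a jk incr_commute[of j k]
  by (auto simp: cube_cells_def)

lemma cube_bd_bd_square:
  assumes a: "length a = m" and jk: "j < k" "k < m" and pts: "cube_pts a {j, k} = X" and l: "l < n"
  shows "(\<Sum>i<n. cube_bd 2 (a, {j, k}) (edge_cube i) * cube_bd 1 (edge_cube i) (vertex_cube l)) = 0"
proof -
  let ?b = "\<lambda>c. cube_bd 1 c (x l, {})"
  have "(\<Sum>i<n. cube_bd 2 (a, {j, k}) (edge_cube i) * cube_bd 1 (edge_cube i) (vertex_cube l))
      = (\<Sum>c\<in>cube_cells m X 1. cube_bd 2 (a, {j, k}) c * ?b c)"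
    unfolding cube_cells1_eq
    by (simp add: sum.reindex[OF cycle_complex.e_inj[OF cycle_complex_cubes]] vertex_cube_def)
  also have "\<dots> = (\<Sum>c\<in>cube_cells m X 1.
        - ((if c = (a, {k}) then ?b (a, {k}) else 0) - (if c = (incr j a, {k}) then ?b (incr j a, {k}) else 0))
        + ((if c = (a, {j}) then ?b (a, {j}) else 0) - (if c = (incr k a, {j}) then ?b (incr k a, {j}) else 0)))"
  proof (intro sum.cong refl)
    fix c
    have select: "(if c = F then 1 else 0) * ?b c = (if c = F then ?b F else 0)" for F
      by simp
    show "cube_bd 2 (a, {j, k}) c * ?b c =
        - ((if c = (a, {k}) then ?b (a, {k}) else 0) - (if c = (incr j a, {k}) then ?b (incr j a, {k}) else 0))
        + ((if c = (a, {j}) then ?b (a, {j}) else 0) - (if c = (incr k a, {j}) then ?b (incr k a, {j}) else 0))"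
      unfolding cube_bd_square[OF jk(1)] select[symmetric]
      by (simp only: ring_distribs mult_minus_left)
  qed
  also have "\<dots> = - (?b (a, {k}) - ?b (incr j a, {k})) + (?b (a, {j}) - ?b (incr k a, {j}))"
    using square_faces[OF assms(1-4)] finite_imageI[of "{..<n}" edge_cube]
    unfolding cube_cells1_eq[symmetric]
    by (simp add: sum.distrib sum_subtractf sum_negf)
  also have "\<dots> = 0"
    unfolding cube_bd_edge by (simp add: incr_commute[of k j])
  finally show ?thesis .
qed

lemma filled_cycle_complex_square:
  assumes n4: "n = 4" and a: "length a = m" and jk: "j < k" "k < m" and pts: "cube_pts a {j, k} = X"
  shows "filled_cycle_complex n (cube_cells m X) cube_bd vertex_cube edge_cube edge_sign (a, {j, k})"
proof -
  interpret cycle_complex n "cube_cells m X" cube_bd vertex_cube edge_cube edge_sign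
    by (rule cycle_complex_cubes)
  obtain i where i: "i < n" "edge_cube i = (a, {j})"
    using square_faces(3)[OF a jk pts] cube_cells1_eq by auto
  have "cube_bd 2 (a, {j, k}) (a, {j}) = 1"
    using incr_neq[of k a] a jk unfolding cube_bd_square[OF jk(1)] by auto
  then show ?thesis
    using cube_cells2_square[OF assms] no_cube_cells_square[OF n4] cube_bd_bd_square[OF a jk pts] i
    by unfold_locales auto
qed

lemma cube_lefschetz_square:
  assumes n4: "n = 4" and gX: "g ` X \<subseteq> X"
  shows "cube_lefschetz m X g = 1"
proof -
  obtain a j k where a: "length a = m" "j < k" "k < m" "cube_pts a {j, k} = X"
    using square_exists[OF n4] .
  interpret filled_cycle_complex n "cube_cells m X" cube_bd vertex_cube edge_cube edge_sign "(a, {j, k})"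
    using filled_cycle_complex_square[OF n4 a] .
  show ?thesis
    unfolding cube_lefschetz_def using a index_map_x[OF gX] cube_fc_vertex_cube[OF gX]
    by (intro lefschetz_filled[of "\<phi> g"]) auto
qed

end

theorem proposition4p9:
  shows "(\<forall>(X :: 'a set) (adj :: 'a \<Rightarrow> 'a \<Rightarrow> bool) (n :: nat) (x :: nat \<Rightarrow> 'a) (f :: 'a \<Rightarrow> 'a).
           3 \<le> n \<and> digital_cycle X adj n x \<and> digital_continuous X adj f
           \<longrightarrow> simp_lefschetz X adj f \<in> {0, 1, 2}) \<and>
         (\<forall>(n :: nat) (m :: nat) (Y :: int list set) (y :: nat \<Rightarrow> int list) (g :: int list \<Rightarrow> int list)
           (adjY :: int list \<Rightarrow> int list \<Rightarrow> bool).
           3 \<le> n \<and> digital_cycle Y adjY n y \<and> m \<le> 3 \<and> (\<forall>p\<in>Y. length p = m) \<and>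
           (\<forall>u\<in>Y. \<forall>v\<in>Y. adjY u v \<longleftrightarrow> c1_adj u v) \<and> digital_continuous Y adjY g
           \<longrightarrow> cube_lefschetz m Y g = (if n = 4 then 1 else simp_lefschetz Y adjY g))"
proof (intro conjI allI impI)
  fix X :: "'a set" and adj n x f
  assume "3 \<le> n \<and> digital_cycle X adj n x \<and> digital_continuous X adj f"
  then interpret simplicial_cycle X adj n x
    by unfold_locales auto
  show "simp_lefschetz X adj f \<in> {0, 1, 2}"
    using simp_lefschetz_cases \<open>3 \<le> n \<and> _\<close> by blast
next
  fix n m Y y g adjY
  assume A: "3 \<le> n \<and> digital_cycle Y adjY n y \<and> m \<le> 3 \<and> (\<forall>p\<in>Y. length p = m) \<and>
    (\<forall>u\<in>Y. \<forall>v\<in>Y. adjY u v \<longleftrightarrow> c1_adj u v) \<and> digital_continuous Y adjY g"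
  interpret cubical_cycle Y adjY n y m
    using A by unfold_locales auto
  interpret S: simplicial_cycle Y adjY n y
    using A by unfold_locales auto
  show "cube_lefschetz m Y g = (if n = 4 then 1 else simp_lefschetz Y adjY g)"
  proof (cases "n = 4")
    case True
    then show ?thesis using cube_lefschetz_square A by (simp add: digital_continuous_def)
  next
    case False
    then have "4 \<le> n" using A even_n by (cases "n = 3") auto
    then show ?thesis
      using cube_lefschetz_hollow S.simp_lefschetz_hollow A False by simp
  qed
qed

end
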